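(* Let $H=H(x,y)$ be a two-terminal signed graph with $x\neq y$ containing an edge $e$ joining $x$ and $y$. Let $G$ be obtained from $H$ by adding a new vertex $z$ and new edges $yz$ and $xz$ (so $G=\mathcal P(H\cup yz,\,xz)$, a two-terminal signed graph with terminals $x,z$), and suppose that the triangle formed by $e$, $yz$, $zx$ is unbalanced. If $H\sim R_i(x,y)$ for some $i\in\{2,4,5\}$, or $H$ has a $\Psi^*_{xy}(2)$-cover with respect to $e$, then $G$ has a $\Psi^*_{xz}(2)$-cover with respect to the edge $xz$.
   Context: Signed graph: a finite graph (multiple edges and loops allowed) with signature $\sigma:E\to\{1,-1\}$. For a subgraph $S$, $\sigma(S)=\prod_{e\in S}\sigma(e)$; a path is positive if its sign is $1$, negative otherwise. A circuit is a connected $2$-regular subgraph; balanced if it has an even number of negative edges, unbalanced otherwise. A barbell is the union of two unbalanced circuits $C_1,C_2$ and a path $P$ such that either $P$ is trivial and $C_1,C_2$ share exactly one vertex, or $C_1,C_2$ are vertex-disjoint and $P$ joins them meeting $C_1\cup C_2$ only at its ends. A signed circuit is a balanced circuit or a barbell. A tadpole at $x$ is the union of an $xw$-path $P$ (possibly trivial), called the tadpole-path, and an unbalanced circuit $C$ with $V(P)\cap V(C)=\{w\}$. A signed subgraph $6$-cover is a family (multiset) of subgraphs covering each edge exactly $6$ times. For distinct $x,y$ and $t\in[0,3]$, a $\Psi_{xy}(t)$-cover is a signed subgraph $6$-cover consisting of exactly $t$ positive $xy$-paths, $t$ negative $xy$-paths, $t$ tadpoles at $x$, $6-2t$ tadpoles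 at $y$, and some signed circuits. If $e$ is an edge joining $x$ and $y$, a $\Psi^*_{xy}(2)$-cover with respect to $e$ is a $\Psi_{xy}(2)$-cover such that for each $u\in\{x,y\}$, with $u'$ the other vertex of $\{x,y\}$, one of the two tadpoles at $u$ does not contain $u'$ and the tadpole-path of the other tadpole at $u$ contains $e$. Switching at a vertex $v$ reverses the signs of all edges incident with $v$; two signed graphs are equivalent if one is obtained from the other by a sequence of switchings. For a two-terminal signed graph $H(u,v)$, $H\sim R_i(x,y)$ means $H$ is equivalent to a signed graph isomorphic to $R_i$ via an isomorphism sending $u\mapsto x$, $v\mapsto y$. The signed graphs $R_i$ with specified vertices $x,y$ are: $R_2$: vertices $x,y,w$, positive edges $xy,xw,wy$ and a negative edge $wy$ parallel to the positive one. $R_4$: vertices $x,y,a,b$, positive edges $xa,ab,by,xy,xb$ and a negative edge $ab$ parallel to the positive one. $R_5$: vertices $x,y,b,c,d$, positive edges $xc,cd,db,xb,xy,yb$ and a negative edge $cd$ parallel to the positive one. *)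

theory Defs
  imports Main
begin

text \<open>Signed graphs with multiple edges and loops. An edge f has an end set
  ends f of cardinality 1 (loop) or 2; its sign sgn f is 1 or -1.\<close>

record ('v,'e) sgraph =
  verts :: "'v set"
  edges :: "'e set"
  ends  :: "'e \<Rightarrow> 'v set"
  sgn   :: "'e \<Rightarrow> int"

definition wf_sgraph :: "('v,'e) sgraph \<Rightarrow> bool" where
  "wf_sgraph G \<longleftrightarrow> finite (verts G) \<and> finite (edges G) \<and>
     (\<forall>f\<in>edges G. ends G f \<subseteq> verts G \<and> card (ends G f) \<in> {1,2} \<and> sgn G f \<in> {1,-1})"

type_synonym ('v,'e) subgraph = "'v set \<times> 'e set"

definition sigma :: "('v,'e) sgraph \<Rightarrow> ('v,'e) subgraph \<Rightarrow> int" where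
  "sigma G S = (\<Prod>f\<in>snd S. sgn G f)"

definition path_seq :: "('v,'e) sgraph \<Rightarrow> 'v list \<Rightarrow> 'e list \<Rightarrow> bool" where
  "path_seq G vs es \<longleftrightarrow> length vs = Suc (length es) \<and> distinct vs \<and> distinct es \<and>
     set vs \<subseteq> verts G \<and> set es \<subseteq> edges G \<and>
     (\<forall>i<length es. ends G (es!i) = {vs!i, vs!Suc i})"

definition is_path :: "('v,'e) sgraph \<Rightarrow> 'v \<Rightarrow> 'v \<Rightarrow> ('v,'e) subgraph \<Rightarrow> bool" where
  "is_path G a b P \<longleftrightarrow> (\<exists>vs es. path_seq G vs es \<and> hd vs = a \<and> last vs = b \<and>
      P = (set vs, set es))"

text \<open>Circuit = connected 2-regular subgraph (loops and digons allowed).\<close>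
definition is_circuit :: "('v,'e) sgraph \<Rightarrow> ('v,'e) subgraph \<Rightarrow> bool" where
  "is_circuit G C \<longleftrightarrow> (\<exists>vs es. vs \<noteq> [] \<and> length es = length vs \<and> distinct vs \<and> distinct es \<and>
      set vs \<subseteq> verts G \<and> set es \<subseteq> edges G \<and>
      (\<forall>i<length es. ends G (es!i) = {vs!i, vs!((Suc i) mod length vs)}) \<and>
      C = (set vs, set es))"

definition balanced_circuit :: "('v,'e) sgraph \<Rightarrow> ('v,'e) subgraph \<Rightarrow> bool" where
  "balanced_circuit G C \<longleftrightarrow> is_circuit G C \<and> sigma G C = 1"

definition unbalanced_circuit :: "('v,'e) sgraph \<Rightarrow> ('v,'e) subgraph \<Rightarrow> bool" where
  "unbalanced_circuit G C \<longleftrightarrow> is_circuit G C \<and> sigma G C = -1"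

definition is_barbell :: "('v,'e) sgraph \<Rightarrow> ('v,'e) subgraph \<Rightarrow> bool" where
  "is_barbell G B \<longleftrightarrow> (\<exists>C1 C2 P.
      unbalanced_circuit G C1 \<and> unbalanced_circuit G C2 \<and> snd C1 \<inter> snd C2 = {} \<and>
      ((\<exists>v. P = ({v}, {}) \<and> fst C1 \<inter> fst C2 = {v}) \<or>
       (fst C1 \<inter> fst C2 = {} \<and>
        (\<exists>a b. a \<in> fst C1 \<and> b \<in> fst C2 \<and> is_path G a b P \<and>
               fst P \<inter> (fst C1 \<union> fst C2) = {a, b}))) \<and>
      B = (fst C1 \<union> fst C2 \<union> fst P, snd C1 \<union> snd C2 \<union> snd P))"

definition signed_circuit :: "('v,'e) sgraph \<Rightarrow> ('v,'e) subgraph \<Rightarrow> bool" where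
  "signed_circuit G S \<longleftrightarrow> balanced_circuit G S \<or> is_barbell G S"

definition tadpole_pc :: "('v,'e) sgraph \<Rightarrow> 'v \<Rightarrow> ('v,'e) subgraph \<Rightarrow> ('v,'e) subgraph \<Rightarrow> bool" where
  "tadpole_pc G x P C \<longleftrightarrow> (\<exists>w. is_path G x w P \<and> unbalanced_circuit G C \<and> fst P \<inter> fst C = {w})"

definition is_tadpole :: "('v,'e) sgraph \<Rightarrow> 'v \<Rightarrow> ('v,'e) subgraph \<Rightarrow> bool" where
  "is_tadpole G x T \<longleftrightarrow> (\<exists>P C. tadpole_pc G x P C \<and> T = (fst P \<union> fst C, snd P \<union> snd C))"

definition tadpole_path_contains :: "('v,'e) sgraph \<Rightarrow> 'v \<Rightarrow> ('v,'e) subgraph \<Rightarrow> 'e \<Rightarrow> bool" where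
  "tadpole_path_contains G x T e \<longleftrightarrow>
     (\<exists>P C. tadpole_pc G x P C \<and> T = (fst P \<union> fst C, snd P \<union> snd C) \<and> e \<in> snd P)"

text \<open>A family (list = multiset) of subgraphs covering every edge exactly 6 times.\<close>
definition cover6 :: "('v,'e) sgraph \<Rightarrow> ('v,'e) subgraph list \<Rightarrow> bool" where
  "cover6 G Ss \<longleftrightarrow> (\<forall>f\<in>edges G. length (filter (\<lambda>S. f \<in> snd S) Ss) = 6)"

definition psi_cover :: "('v,'e) sgraph \<Rightarrow> 'v \<Rightarrow> 'v \<Rightarrow> nat \<Rightarrow>
   ('v,'e) subgraph list \<Rightarrow> ('v,'e) subgraph list \<Rightarrow> ('v,'e) subgraph list \<Rightarrow>
   ('v,'e) subgraph list \<Rightarrow> ('v,'e) subgraph list \<Rightarrow> bool" where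
  "psi_cover G x y t pp np tx ty sc \<longleftrightarrow>
     length pp = t \<and> length np = t \<and> length tx = t \<and> length ty = 6 - 2 * t \<and>
     (\<forall>P\<in>set pp. is_path G x y P \<and> sigma G P = 1) \<and>
     (\<forall>P\<in>set np. is_path G x y P \<and> sigma G P = -1) \<and>
     (\<forall>T\<in>set tx. is_tadpole G x T) \<and>
     (\<forall>T\<in>set ty. is_tadpole G y T) \<and>
     (\<forall>S\<in>set sc. signed_circuit G S) \<and>
     cover6 G (pp @ np @ tx @ ty @ sc)"

definition star_cond :: "('v,'e) sgraph \<Rightarrow> 'v \<Rightarrow> 'v \<Rightarrow> 'e \<Rightarrow> ('v,'e) subgraph list \<Rightarrow> bool" where
  "star_cond G u u' e ts \<longleftrightarrow> (\<exists>T1 T2. ts = [T1, T2] \<and>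
     ((u' \<notin> fst T1 \<and> tadpole_path_contains G u T2 e) \<or>
      (u' \<notin> fst T2 \<and> tadpole_path_contains G u T1 e)))"

definition has_psi_star2 :: "('v,'e) sgraph \<Rightarrow> 'v \<Rightarrow> 'v \<Rightarrow> 'e \<Rightarrow> bool" where
  "has_psi_star2 G x y e \<longleftrightarrow> (\<exists>pp np tx ty sc. psi_cover G x y 2 pp np tx ty sc \<and>
      star_cond G x y e tx \<and> star_cond G y x e ty)"

text \<open>Switching. Loops keep their sign (their sign is reversed twice).\<close>
definition switch_at :: "('v,'e) sgraph \<Rightarrow> 'v \<Rightarrow> ('v,'e) sgraph" where
  "switch_at G v = G\<lparr>sgn := (\<lambda>f. if v \<in> ends G f \<and> card (ends G f) = 2 then - sgn G f else sgn G f)\<rparr>"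

definition sw_equiv :: "('v,'e) sgraph \<Rightarrow> ('v,'e) sgraph \<Rightarrow> bool" where
  "sw_equiv = (\<lambda>A B. \<exists>v\<in>verts A. B = switch_at A v)\<^sup>*\<^sup>*"

definition iso_2t :: "('v,'e) sgraph \<Rightarrow> 'v \<Rightarrow> 'v \<Rightarrow> ('w,'f) sgraph \<Rightarrow> 'w \<Rightarrow> 'w \<Rightarrow> bool" where
  "iso_2t G a b R ra rb \<longleftrightarrow> (\<exists>\<phi> \<psi>. bij_betw \<phi> (verts G) (verts R) \<and> bij_betw \<psi> (edges G) (edges R) \<and>
     (\<forall>f\<in>edges G. ends R (\<psi> f) = \<phi> ` ends G f \<and> sgn R (\<psi> f) = sgn G f) \<and>
     \<phi> a = ra \<and> \<phi> b = rb)"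

definition sim_R :: "('v,'e) sgraph \<Rightarrow> 'v \<Rightarrow> 'v \<Rightarrow> ('w,'f) sgraph \<Rightarrow> 'w \<Rightarrow> 'w \<Rightarrow> bool" where
  "sim_R H u v R rx ry \<longleftrightarrow> (\<exists>H'. sw_equiv H H' \<and> iso_2t H' u v R rx ry)"

definition mk_sg :: "nat \<Rightarrow> (nat \<times> nat \<times> int) list \<Rightarrow> (nat, nat) sgraph" where
  "mk_sg n L = \<lparr>verts = {..<n}, edges = {..<length L},
     ends = (\<lambda>i. {fst (L!i), fst (snd (L!i))}), sgn = (\<lambda>i. snd (snd (L!i)))\<rparr>"

text \<open>R2: x=0, y=1, w=2.\<close>
definition R2 :: "(nat, nat) sgraph" where
  "R2 = mk_sg 3 [(0,1,1), (0,2,1), (2,1,1), (2,1,-1)]"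

text \<open>R4: x=0, y=1, a=2, b=3.\<close>
definition R4 :: "(nat, nat) sgraph" where
  "R4 = mk_sg 4 [(0,2,1), (2,3,1), (3,1,1), (0,1,1), (0,3,1), (2,3,-1)]"

text \<open>R5: x=0, y=1, b=2, c=3, d=4.\<close>
definition R5 :: "(nat, nat) sgraph" where
  "R5 = mk_sg 5 [(0,3,1), (3,4,1), (4,2,1), (0,2,1), (0,1,1), (1,2,1), (3,4,-1)]"

end

(*
  A \<Psi>\<^sup>*_xy(2)-cover of H is rerouted through z. The two xy-paths whose sign is that of e are
  extended by yz, and the edge xz is taken twice; this gives the two xz-paths of each sign. Of the
  two xy-paths of the other sign, one closes with e to an unbalanced circuit, a tadpole at x, and
  the other closes with yz and zx to a balanced circuit. The tadpole at x avoiding y becomes a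
  tadpole at z by prefixing zx; the tadpole at x whose path starts with e is rerouted along x z y.
  The tadpole at y avoiding x becomes a tadpole at z by prefixing zy; the tadpole at y whose path
  starts with e forms, together with the unbalanced triangle xyz, a barbell. Every edge keeps
  multiplicity 6.
  Covers are transported along isomorphisms and switchings, so if H \<sim> R_i it suffices to exhibit
  a \<Psi>\<^sup>*-cover of the fixed graph obtained from R_i in the same way.
*)

theory Submission
  imports Defs "HOL-Library.Multiset"
begin

section \<open>Paths, circuits and tadpoles\<close>

lemma path_seq_Nil: "path_seq G vs [] \<longleftrightarrow> (\<exists>v. vs = [v] \<and> v \<in> verts G)"
  unfolding path_seq_def by (cases vs) auto

lemma path_seq_Cons: "path_seq G (v # vs) (f # es) \<longleftrightarrow>
   path_seq G vs es \<and> v \<notin> set vs \<and> f \<notin> set es \<and> v \<in> verts G \<and> f \<in> edges G \<and> ends G f = {v, hd vs}"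
  (is "?l \<longleftrightarrow> ?r")
proof
  assume ?l
  then have "vs \<noteq> []" and ends: "\<And>i. i < Suc (length es) \<Longrightarrow> ends G ((f#es)!i) = {(v#vs)!i, (v#vs)!Suc i}"
    by (auto simp: path_seq_def)
  then have "ends G f = {v, hd vs}" and "\<forall>i<length es. ends G (es!i) = {vs!i, vs!Suc i}"
    using ends[of 0] ends[of "Suc _"] by (auto simp: hd_conv_nth)
  with \<open>?l\<close> show ?r by (simp add: path_seq_def)
next
  assume ?r
  then have "vs \<noteq> []" by (auto simp: path_seq_def)
  with \<open>?r\<close> have "\<forall>i<length (f#es). ends G ((f#es)!i) = {(v#vs)!i, (v#vs)!Suc i}"
    by (auto simp: path_seq_def hd_conv_nth nth_Cons split: nat.split)
  with \<open>?r\<close> show ?l by (simp add: path_seq_def)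
qed

lemma path_seq_not_Nil: "path_seq G vs es \<Longrightarrow> vs \<noteq> []"
  by (auto simp: path_seq_def)

lemma path_seq_subset: "path_seq G vs es \<Longrightarrow> set vs \<subseteq> verts G \<and> set es \<subseteq> edges G"
  by (simp add: path_seq_def)

lemma path_seq_snoc:
  assumes "path_seq G vs es" "v \<notin> set vs" "f \<notin> set es" "v \<in> verts G" "f \<in> edges G"
    "ends G f = {last vs, v}"
  shows "path_seq G (vs @ [v]) (es @ [f])"
  using assms
proof (induction es arbitrary: vs)
  case Nil
  then show ?case by (auto simp: path_seq_Cons path_seq_Nil)
next
  case (Cons g es)
  then obtain u vs' where vs: "vs = u # vs'"
    by (cases vs) (auto simp: path_seq_def)
  with Cons.prems have "path_seq G vs' es" and "vs' \<noteq> []"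
    by (auto simp: path_seq_Cons dest: path_seq_not_Nil)
  with Cons vs show ?case by (auto simp: path_seq_Cons)
qed

lemma path_seq_edge_ends: "path_seq G vs es \<Longrightarrow> g \<in> set es \<Longrightarrow> ends G g \<subseteq> set vs"
proof -
  assume P: "path_seq G vs es" and g: "g \<in> set es"
  then obtain i where i: "i < length es" "g = es!i" by (auto simp: in_set_conv_nth)
  then have "ends G g = {vs!i, vs!Suc i}" "Suc i < length vs" using P by (simp_all add: path_seq_def)
  then show ?thesis by auto
qed

lemma path_seq_starting_edge:
  assumes "path_seq G vs es" "hd vs = u" "g \<in> set es" "ends G g = {u, v}" "u \<noteq> v"
  shows "\<exists>vs' es'. vs = u # vs' \<and> es = g # es' \<and> hd vs' = v"
proof -
  obtain i where i: "i < length es" "es!i = g" using assms(3) by (auto simp: in_set_conv_nth)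
  have len: "length vs = Suc (length es)" and dist: "distinct vs" and
    ends: "ends G g = {vs!i, vs!Suc i}" using assms(1) i by (auto simp: path_seq_def)
  have u: "vs!0 = u" using assms(2) len by (cases vs) auto
  have "i = 0"
  proof (rule ccontr)
    assume "i \<noteq> 0"
    then have "vs!i \<noteq> u" "vs!Suc i \<noteq> u" using dist len i u by (auto simp: nth_eq_iff_index_eq)
    with ends assms(4) show False by (auto simp: doubleton_eq_iff)
  qed
  moreover have "vs!1 \<noteq> u" using dist len i u \<open>i = 0\<close> by (auto simp: nth_eq_iff_index_eq)
  ultimately have "vs!1 = v" using ends assms(4,5) by (auto simp: doubleton_eq_iff)
  moreover obtain a vs' where "vs = a # vs'" using len by (cases vs) auto
  moreover obtain b es' where "es = b # es'" using i by (cases es) auto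
  ultimately show ?thesis using u i \<open>i = 0\<close> len by (cases vs') auto
qed

lemma is_pathI: "path_seq G vs es \<Longrightarrow> hd vs = a \<Longrightarrow> last vs = b \<Longrightarrow> is_path G a b (set vs, set es)"
  unfolding is_path_def by blast

lemma is_path_subset:
  assumes "is_path G a b P"
  shows "fst P \<subseteq> verts G \<and> snd P \<subseteq> edges G \<and> a \<in> fst P \<and> b \<in> fst P"
proof -
  obtain vs es where "path_seq G vs es" "hd vs = a" "last vs = b" "P = (set vs, set es)"
    using assms unfolding is_path_def by blast
  moreover from this(1) have "vs \<noteq> []" by (rule path_seq_not_Nil)
  ultimately show ?thesis by (auto dest: path_seq_subset)
qed

lemma is_circuit_closed_path:
  assumes "path_seq G vs es" "g \<in> edges G" "g \<notin> set es" "ends G g = {last vs, hd vs}"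
  shows "is_circuit G (set vs, insert g (set es))"
proof -
  have len: "length vs = Suc (length es)" using assms(1) by (simp add: path_seq_def)
  then have "vs \<noteq> []" by auto
  have "\<forall>i<length (es@[g]). ends G ((es@[g])!i) = {vs!i, vs!(Suc i mod length vs)}"
  proof (intro allI impI)
    fix i assume "i < length (es@[g])"
    then consider "i < length es" | "i = length es" by fastforce
    then show "ends G ((es@[g])!i) = {vs!i, vs!(Suc i mod length vs)}"
    proof cases
      case 1
      then show ?thesis using assms(1) len by (simp add: path_seq_def nth_append)
    next
      case 2
      then show ?thesis
        using assms(4) len \<open>vs \<noteq> []\<close> by (simp add: nth_append hd_conv_nth last_conv_nth)
    qed
  qed
  then have "is_circuit G (set vs, set (es @ [g]))"
    unfolding is_circuit_def using assms len
    by (intro exI[of _ vs] exI[of _ "es@[g]"]) (auto simp: path_seq_def)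
  then show ?thesis by simp
qed

lemma is_circuit_obtain_closed_path:
  assumes "is_circuit G C"
  obtains vs es g where "path_seq G vs es" "g \<in> edges G" "g \<notin> set es"
    "ends G g = {last vs, hd vs}" "C = (set vs, insert g (set es))"
proof -
  obtain vs es where C: "vs \<noteq> []" "length es = length vs" "distinct vs" "distinct es"
      "set vs \<subseteq> verts G" "set es \<subseteq> edges G" "C = (set vs, set es)"
      and ends: "\<forall>i<length es. ends G (es!i) = {vs!i, vs!(Suc i mod length vs)}"
    using assms unfolding is_circuit_def by blast
  define n where "n = length es - 1"
  have n: "length vs = Suc n" "length es = Suc n" using C(1,2) n_def by (cases vs; auto)+
  then have es: "es = butlast es @ [last es]" by (cases es rule: rev_cases) auto
  have "path_seq G vs (butlast es)"
    unfolding path_seq_def using C ends n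
    by (auto simp: nth_butlast distinct_butlast dest: in_set_butlastD)
  moreover have "last es \<notin> set (butlast es)"
    using C(4) es by (metis distinct_append not_distinct_conv_prefix)
  moreover have "last es \<in> edges G"
    using C(6) n by (metis last_in_set list.size(3) nat.distinct(1) subsetD)
  moreover have "ends G (last es) = {last vs, hd vs}"
  proof -
    have "vs \<noteq> []" "es \<noteq> []" using n by auto
    then show ?thesis
      using ends[rule_format, of n] n by (simp add: last_conv_nth hd_conv_nth insert_commute)
  qed
  moreover have "C = (set vs, insert (last es) (set (butlast es)))"
    using C(7) n by (cases es rule: rev_cases) auto
  ultimately show ?thesis using that by blast
qed

lemma is_circuit_subset: "is_circuit G C \<Longrightarrow> fst C \<subseteq> verts G \<and> snd C \<subseteq> edges G"
  unfolding is_circuit_def by auto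

lemma unbalanced_circuit_subset: "unbalanced_circuit G C \<Longrightarrow> fst C \<subseteq> verts G \<and> snd C \<subseteq> edges G"
  unfolding unbalanced_circuit_def by (simp add: is_circuit_subset)

lemma is_circuit_edge_ends:
  assumes "is_circuit G C" "g \<in> snd C"
  shows "ends G g \<subseteq> fst C"
proof -
  obtain vs es h where P: "path_seq G vs es" "ends G h = {last vs, hd vs}"
    and C: "C = (set vs, insert h (set es))"
    using assms(1) by (rule is_circuit_obtain_closed_path)
  have "vs \<noteq> []" using P(1) by (rule path_seq_not_Nil)
  then show ?thesis using assms(2) P path_seq_edge_ends[OF P(1)] by (auto simp: C)
qed

lemma tadpole_subset:
  assumes "is_tadpole G u T"
  shows "fst T \<subseteq> verts G \<and> snd T \<subseteq> edges G"
proof -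
  obtain P C w where "is_path G u w P" "unbalanced_circuit G C" "T = (fst P \<union> fst C, snd P \<union> snd C)"
    using assms unfolding is_tadpole_def tadpole_pc_def by blast
  then show ?thesis using is_path_subset unbalanced_circuit_subset by fastforce
qed

lemma tadpole_edge_ends:
  assumes "is_tadpole G u T" "g \<in> snd T"
  shows "ends G g \<subseteq> fst T"
proof -
  obtain P C w where W: "is_path G u w P" "unbalanced_circuit G C"
    and T: "T = (fst P \<union> fst C, snd P \<union> snd C)"
    using assms(1) unfolding is_tadpole_def tadpole_pc_def by blast
  obtain vs es where V: "path_seq G vs es" "P = (set vs, set es)"
    using W(1) unfolding is_path_def by blast
  show ?thesis
  proof (cases "g \<in> snd P")
    case True
    then show ?thesis using path_seq_edge_ends[OF V(1), of g] V(2) T by auto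
  next
    case False
    then have "g \<in> snd C" using assms(2) T by auto
    then show ?thesis
      using is_circuit_edge_ends[of G C g] W(2) T unfolding unbalanced_circuit_def by auto
  qed
qed

lemma barbell_subset:
  assumes "is_barbell G T"
  shows "fst T \<subseteq> verts G \<and> snd T \<subseteq> edges G"
proof -
  obtain C1 C2 P where U: "unbalanced_circuit G C1" "unbalanced_circuit G C2"
    and P: "(\<exists>v. P = ({v}, {}) \<and> fst C1 \<inter> fst C2 = {v}) \<or>
       (fst C1 \<inter> fst C2 = {} \<and>
        (\<exists>a b. a \<in> fst C1 \<and> b \<in> fst C2 \<and> is_path G a b P \<and>
               fst P \<inter> (fst C1 \<union> fst C2) = {a, b}))"
    and T: "T = (fst C1 \<union> fst C2 \<union> fst P, snd C1 \<union> snd C2 \<union> snd P)"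
    using assms unfolding is_barbell_def by blast
  from P have "fst P \<subseteq> verts G \<and> snd P \<subseteq> edges G"
  proof
    assume "\<exists>v. P = ({v}, {}) \<and> fst C1 \<inter> fst C2 = {v}"
    then obtain v where Pv: "P = ({v}, {})" and v: "fst C1 \<inter> fst C2 = {v}" by blast
    have "v \<in> fst C1" using v by blast
    then show ?thesis using Pv unbalanced_circuit_subset[OF U(1)] by auto
  next
    assume "fst C1 \<inter> fst C2 = {} \<and> (\<exists>a b. a \<in> fst C1 \<and> b \<in> fst C2 \<and> is_path G a b P \<and>
               fst P \<inter> (fst C1 \<union> fst C2) = {a, b})"
    then obtain a b where "is_path G a b P" by blast
    then show ?thesis by (simp add: is_path_subset)
  qed
  then show ?thesis
    using T unbalanced_circuit_subset[OF U(1)] unbalanced_circuit_subset[OF U(2)] by auto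
qed

lemma signed_circuit_subset: "signed_circuit G S \<Longrightarrow> fst S \<subseteq> verts G \<and> snd S \<subseteq> edges G"
  unfolding signed_circuit_def balanced_circuit_def using barbell_subset is_circuit_subset by blast

lemma psi_cover_edges_subset:
  assumes "psi_cover G a b t pp np tx ty sc"
  shows "\<forall>S\<in>set (pp @ np @ tx @ ty @ sc). snd S \<subseteq> edges G"
  using assms is_path_subset tadpole_subset signed_circuit_subset
  unfolding psi_cover_def by fastforce

lemma tadpole_path_contains_is_tadpole: "tadpole_path_contains G u T f \<Longrightarrow> is_tadpole G u T"
  unfolding tadpole_path_contains_def is_tadpole_def by blast

lemma tadpole_path_contains_first_edge:
  assumes T: "tadpole_path_contains G u T e" and e: "ends G e = {u, u'}" "u \<noteq> u'"
  obtains vs es C w where "path_seq G vs es" "hd vs = u'" "last vs = w" "u \<notin> set vs" "e \<notin> set es"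
    "unbalanced_circuit G C" "set vs \<inter> fst C = {w}" "u \<notin> fst C" "e \<notin> snd C"
    "T = (insert u (set vs) \<union> fst C, insert e (set es) \<union> snd C)"
proof -
  obtain P C w where P: "is_path G u w P" and C: "unbalanced_circuit G C" and PC: "fst P \<inter> fst C = {w}"
    and T: "T = (fst P \<union> fst C, snd P \<union> snd C)" and eP: "e \<in> snd P"
    using assms unfolding tadpole_path_contains_def tadpole_pc_def by blast
  obtain vs es where V: "path_seq G vs es" "hd vs = u" "last vs = w" "P = (set vs, set es)"
    using P unfolding is_path_def by blast
  obtain vs' es' where Q: "vs = u # vs'" "es = e # es'" "hd vs' = u'"
    using path_seq_starting_edge[OF V(1,2), of e u'] eP V(4) e by auto
  have P': "path_seq G vs' es'" "u \<notin> set vs'" "e \<notin> set es'"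
    using V(1) Q by (auto simp: path_seq_Cons)
  have "vs' \<noteq> []" using P'(1) by (rule path_seq_not_Nil)
  then have w: "last vs' = w" using V(3) Q(1) by simp
  have uC: "u \<notin> fst C"
  proof
    assume "u \<in> fst C"
    then have "u = w" using PC V(4) Q(1) by auto
    then show False using w \<open>vs' \<noteq> []\<close> P'(2) last_in_set by metis
  qed
  moreover have "e \<notin> snd C"
    using uC e is_circuit_edge_ends[of G C e] C unfolding unbalanced_circuit_def by blast
  moreover have "set vs' \<inter> fst C = {w}" using PC V(4) Q(1) uC by auto
  moreover have "T = (insert u (set vs') \<union> fst C, insert e (set es') \<union> snd C)"
    using T V(4) Q by simp
  ultimately show ?thesis using that P' Q(3) w C by blast
qed

lemma star_condE:
  assumes "star_cond G u u' e ts"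
  obtains T1 T2 where "mset ts = mset [T1, T2]" "set ts = {T1, T2}" "u' \<notin> fst T1"
    "tadpole_path_contains G u T2 e"
proof -
  obtain T1 T2 where ts: "ts = [T1, T2]" and "(u' \<notin> fst T1 \<and> tadpole_path_contains G u T2 e) \<or>
      (u' \<notin> fst T2 \<and> tadpole_path_contains G u T1 e)"
    using assms unfolding star_cond_def by blast
  then show ?thesis
  proof (elim disjE conjE)
    assume "u' \<notin> fst T1" "tadpole_path_contains G u T2 e"
    then show ?thesis using that[of T1 T2] ts by simp
  next
    assume "u' \<notin> fst T2" "tadpole_path_contains G u T1 e"
    then show ?thesis using that[of T2 T1] ts by (simp add: add_mset_commute insert_commute)
  qed
qed

lemma cover6_mset_cong: "mset Ss = mset Ts \<Longrightarrow> cover6 G Ss \<longleftrightarrow> cover6 G Ts"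
  unfolding cover6_def by (metis mset_filter size_mset)

lemma has_psi_star2I:
  assumes "\<forall>P\<in>set Q. is_path G a b P \<and> sigma G P = - s" "\<forall>P\<in>set F. is_path G a b P \<and> sigma G P = s"
    "s \<in> {1, -1}" "length Q = 2" "length F = 2"
    "\<forall>T\<in>set X. is_tadpole G a T" "\<forall>T\<in>set Z. is_tadpole G b T" "\<forall>S\<in>set S. signed_circuit G S"
    "cover6 G (Q @ F @ X @ Z @ S)" "star_cond G a b f X" "star_cond G b a f Z"
  shows "has_psi_star2 G a b f"
proof -
  have lengths: "length X = 2" "length Z = 2" using assms(10,11) unfolding star_cond_def by auto
  have "psi_cover G a b 2 F Q X Z S \<or> psi_cover G a b 2 Q F X Z S"
  proof (cases "s = 1")
    case True
    have "cover6 G (F @ Q @ X @ Z @ S)"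
      by (rule cover6_mset_cong[THEN iffD1, OF _ assms(9)]) (simp add: ac_simps)
    then show ?thesis using True assms(1-8) lengths by (simp add: psi_cover_def)
  next
    case False
    then have "s = -1" using assms(3) by simp
    then show ?thesis using assms(1-9) lengths by (simp add: psi_cover_def)
  qed
  then show ?thesis unfolding has_psi_star2_def using assms(10,11) by blast
qed

section \<open>Switching embeddings\<close>

text \<open>\<phi> and \<psi> embed A into B after switching A at the vertices where \<tau> is -1.\<close>

locale switching_emb =
  fixes A :: "('v,'e) sgraph" and B :: "('w,'f) sgraph"
    and \<phi> :: "'v \<Rightarrow> 'w" and \<psi> :: "'e \<Rightarrow> 'f" and \<tau> :: "'v \<Rightarrow> int"
  assumes inj_verts: "inj_on \<phi> (verts A)"
    and verts_into: "\<phi> ` verts A \<subseteq> verts B"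
    and inj_edges: "inj_on \<psi> (edges A)"
    and edges_into: "\<psi> ` edges A \<subseteq> edges B"
    and ends_image: "f \<in> edges A \<Longrightarrow> ends B (\<psi> f) = \<phi> ` ends A f"
    and sgn_image: "f \<in> edges A \<Longrightarrow> ends A f = {a, b} \<Longrightarrow> sgn B (\<psi> f) = sgn A f * \<tau> a * \<tau> b"
    and switching_sign: "\<tau> a = 1 \<or> \<tau> a = -1"

definition map_subgraph :: "('v \<Rightarrow> 'w) \<Rightarrow> ('e \<Rightarrow> 'f) \<Rightarrow> ('v,'e) subgraph \<Rightarrow> ('w,'f) subgraph" where
  "map_subgraph \<phi> \<psi> S = (\<phi> ` fst S, \<psi> ` snd S)"

lemma map_subgraph_Un: "map_subgraph \<phi> \<psi> (fst P \<union> fst C, snd P \<union> snd C) =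
    (fst (map_subgraph \<phi> \<psi> P) \<union> fst (map_subgraph \<phi> \<psi> C), snd (map_subgraph \<phi> \<psi> P) \<union> snd (map_subgraph \<phi> \<psi> C))"
  by (simp add: map_subgraph_def image_Un)

lemma map_subgraph_id [simp]: "map_subgraph id id S = S"
  by (simp add: map_subgraph_def)

context switching_emb
begin

lemma switching_sign_square: "\<tau> a * \<tau> a = 1"
  using switching_sign[of a] by auto

lemma path_seq_image:
  assumes "path_seq A vs es"
  shows "path_seq B (map \<phi> vs) (map \<psi> es)"
proof -
  have sub: "set vs \<subseteq> verts A" "set es \<subseteq> edges A" using assms by (simp_all add: path_seq_def)
  then have "inj_on \<phi> (set vs)" "inj_on \<psi> (set es)"
    using inj_verts inj_edges by (auto intro: inj_on_subset)
  moreover have "ends B (\<psi> (es!i)) = {\<phi> (vs!i), \<phi> (vs!Suc i)}" if "i < length es" for i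
  proof -
    have "es!i \<in> edges A" using that sub by auto
    then show ?thesis using ends_image that assms by (simp add: path_seq_def)
  qed
  moreover have "\<phi> ` set vs \<subseteq> verts B" "\<psi> ` set es \<subseteq> edges B"
    using sub verts_into edges_into by blast+
  ultimately show ?thesis using assms by (auto simp: path_seq_def distinct_map)
qed

lemma sigma_path_image:
  assumes "path_seq A vs es"
  shows "sigma B (V, \<psi> ` set es) = sigma A (W, set es) * \<tau> (hd vs) * \<tau> (last vs)"
  using assms
proof (induction es arbitrary: vs)
  case Nil
  then obtain v where "vs = [v]" by (auto simp: path_seq_Nil)
  then show ?case by (simp add: sigma_def switching_sign_square)
next
  case (Cons f es)
  then obtain v vs' where vs: "vs = v # vs'" by (cases vs) (auto simp: path_seq_def)
  with Cons.prems have P: "path_seq A vs' es" "f \<notin> set es" "f \<in> edges A" "ends A f = {v, hd vs'}"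
    by (simp_all add: path_seq_Cons)
  have "vs' \<noteq> []" using P(1) by (rule path_seq_not_Nil)
  have "\<psi> f \<notin> \<psi> ` set es"
    using P(2,3) path_seq_subset[OF P(1)] inj_edges by (auto simp: inj_on_def)
  then have "sigma B (V, \<psi> ` set (f # es)) = sgn B (\<psi> f) * sigma B (V, \<psi> ` set es)"
    by (simp add: sigma_def)
  also have "\<dots> = (sgn A f * sigma A (W, set es)) * \<tau> v * \<tau> (last vs') * (\<tau> (hd vs') * \<tau> (hd vs'))"
    using Cons.IH[OF P(1)] sgn_image[OF P(3,4)] by (simp add: ac_simps)
  also have "sgn A f * sigma A (W, set es) = sigma A (W, set (f # es))"
    using P(2) by (simp add: sigma_def)
  finally show ?case using vs \<open>vs' \<noteq> []\<close> by (simp add: switching_sign_square)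
qed

lemma is_path_image:
  assumes "is_path A a b P"
  shows "is_path B (\<phi> a) (\<phi> b) (map_subgraph \<phi> \<psi> P)"
    and "sigma B (map_subgraph \<phi> \<psi> P) = sigma A P * \<tau> a * \<tau> b"
proof -
  obtain vs es where V: "path_seq A vs es" "hd vs = a" "last vs = b" "P = (set vs, set es)"
    using assms unfolding is_path_def by blast
  have "vs \<noteq> []" using V(1) by (rule path_seq_not_Nil)
  then show "is_path B (\<phi> a) (\<phi> b) (map_subgraph \<phi> \<psi> P)"
    using is_pathI[OF path_seq_image[OF V(1)]] V by (simp add: map_subgraph_def hd_map last_map)
  show "sigma B (map_subgraph \<phi> \<psi> P) = sigma A P * \<tau> a * \<tau> b"
    using sigma_path_image[OF V(1)] V by (simp add: map_subgraph_def)
qed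

lemma is_circuit_image:
  assumes "is_circuit A C"
  shows "is_circuit B (map_subgraph \<phi> \<psi> C)" and "sigma B (map_subgraph \<phi> \<psi> C) = sigma A C"
proof -
  obtain vs es g where P: "path_seq A vs es" "g \<in> edges A" "g \<notin> set es"
    "ends A g = {last vs, hd vs}" and C: "C = (set vs, insert g (set es))"
    using assms by (rule is_circuit_obtain_closed_path)
  have "vs \<noteq> []" using P(1) by (rule path_seq_not_Nil)
  have g: "\<psi> g \<notin> \<psi> ` set es"
    using P(2,3) path_seq_subset[OF P(1)] inj_edges by (auto simp: inj_on_def)
  then show "is_circuit B (map_subgraph \<phi> \<psi> C)"
    using is_circuit_closed_path[OF path_seq_image[OF P(1)]] P edges_into ends_image[OF P(2)]
      \<open>vs \<noteq> []\<close> by (auto simp: C map_subgraph_def hd_map last_map)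
  have "sigma B (map_subgraph \<phi> \<psi> C) = sgn B (\<psi> g) * sigma B (\<phi> ` set vs, \<psi> ` set es)"
    using g by (simp add: C map_subgraph_def sigma_def)
  also have "\<dots> = sgn A g * sigma A (set vs, set es) * (\<tau> (hd vs) * \<tau> (hd vs)) * (\<tau> (last vs) * \<tau> (last vs))"
    using sigma_path_image[OF P(1)] sgn_image[OF P(2,4)] by (simp add: ac_simps)
  also have "\<dots> = sigma A C"
    using P(3) by (simp add: C sigma_def switching_sign_square)
  finally show "sigma B (map_subgraph \<phi> \<psi> C) = sigma A C" .
qed

lemma unbalanced_circuit_image: "unbalanced_circuit A C \<Longrightarrow> unbalanced_circuit B (map_subgraph \<phi> \<psi> C)"
  unfolding unbalanced_circuit_def using is_circuit_image by simp

lemma balanced_circuit_image: "balanced_circuit A C \<Longrightarrow> balanced_circuit B (map_subgraph \<phi> \<psi> C)"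
  unfolding balanced_circuit_def using is_circuit_image by simp

lemma image_Int_verts: "X \<subseteq> verts A \<Longrightarrow> Y \<subseteq> verts A \<Longrightarrow> \<phi> ` X \<inter> \<phi> ` Y = \<phi> ` (X \<inter> Y)"
  using inj_verts by (simp add: inj_on_image_Int)

lemma barbell_image:
  assumes "is_barbell A S"
  shows "is_barbell B (map_subgraph \<phi> \<psi> S)"
proof -
  let ?m = "map_subgraph \<phi> \<psi>"
  obtain C1 C2 P where U: "unbalanced_circuit A C1" "unbalanced_circuit A C2" "snd C1 \<inter> snd C2 = {}"
    and P: "(\<exists>v. P = ({v}, {}) \<and> fst C1 \<inter> fst C2 = {v}) \<or>
       (fst C1 \<inter> fst C2 = {} \<and>
        (\<exists>a b. a \<in> fst C1 \<and> b \<in> fst C2 \<and> is_path A a b P \<and>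
               fst P \<inter> (fst C1 \<union> fst C2) = {a, b}))"
    and S: "S = (fst C1 \<union> fst C2 \<union> fst P, snd C1 \<union> snd C2 \<union> snd P)"
    using assms unfolding is_barbell_def by blast
  note sub = unbalanced_circuit_subset[OF U(1)] unbalanced_circuit_subset[OF U(2)]
  have U': "unbalanced_circuit B (?m C1)" "unbalanced_circuit B (?m C2)"
    using U unbalanced_circuit_image by blast+
  have "snd (?m C1) \<inter> snd (?m C2) = {}"
    using inj_on_image_Int[OF inj_edges, of "snd C1" "snd C2"] sub U(3) by (simp add: map_subgraph_def)
  moreover have V: "fst (?m C1) \<inter> fst (?m C2) = \<phi> ` (fst C1 \<inter> fst C2)"
    using image_Int_verts sub by (simp add: map_subgraph_def)
  moreover have "?m S = (fst (?m C1) \<union> fst (?m C2) \<union> fst (?m P), snd (?m C1) \<union> snd (?m C2) \<union> snd (?m P))"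
    using S by (simp add: map_subgraph_def image_Un)
  moreover have "(\<exists>v. ?m P = ({v}, {}) \<and> fst (?m C1) \<inter> fst (?m C2) = {v}) \<or>
       (fst (?m C1) \<inter> fst (?m C2) = {} \<and>
        (\<exists>a b. a \<in> fst (?m C1) \<and> b \<in> fst (?m C2) \<and> is_path B a b (?m P) \<and>
               fst (?m P) \<inter> (fst (?m C1) \<union> fst (?m C2)) = {a, b}))"
    using P
  proof
    assume "\<exists>v. P = ({v}, {}) \<and> fst C1 \<inter> fst C2 = {v}"
    then show ?thesis using V by (auto simp: map_subgraph_def)
  next
    assume "fst C1 \<inter> fst C2 = {} \<and> (\<exists>a b. a \<in> fst C1 \<and> b \<in> fst C2 \<and> is_path A a b P \<and>
               fst P \<inter> (fst C1 \<union> fst C2) = {a, b})"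
    then obtain a b where ab: "fst C1 \<inter> fst C2 = {}" "a \<in> fst C1" "b \<in> fst C2" "is_path A a b P"
      "fst P \<inter> (fst C1 \<union> fst C2) = {a, b}" by blast
    have "fst (?m P) \<inter> (fst (?m C1) \<union> fst (?m C2)) = \<phi> ` (fst P \<inter> (fst C1 \<union> fst C2))"
      using image_Int_verts[of "fst P" "fst C1 \<union> fst C2"] is_path_subset[OF ab(4)] sub
      by (simp add: map_subgraph_def image_Un)
    then show ?thesis
      using ab V is_path_image(1)[OF ab(4)] by (auto simp: map_subgraph_def)
  qed
  ultimately show ?thesis unfolding is_barbell_def using U' by blast
qed

lemma signed_circuit_image: "signed_circuit A S \<Longrightarrow> signed_circuit B (map_subgraph \<phi> \<psi> S)"
  unfolding signed_circuit_def using balanced_circuit_image barbell_image by blast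

lemma tadpole_pc_image:
  assumes "tadpole_pc A u P C"
  shows "tadpole_pc B (\<phi> u) (map_subgraph \<phi> \<psi> P) (map_subgraph \<phi> \<psi> C)"
proof -
  obtain w where W: "is_path A u w P" "unbalanced_circuit A C" "fst P \<inter> fst C = {w}"
    using assms unfolding tadpole_pc_def by blast
  have "fst (map_subgraph \<phi> \<psi> P) \<inter> fst (map_subgraph \<phi> \<psi> C) = {\<phi> w}"
    using image_Int_verts is_path_subset[OF W(1)] unbalanced_circuit_subset[OF W(2)] W(3)
    by (simp add: map_subgraph_def)
  then show ?thesis
    unfolding tadpole_pc_def using is_path_image(1)[OF W(1)] unbalanced_circuit_image[OF W(2)] by blast
qed

lemma is_tadpole_image:
  assumes "is_tadpole A u T"
  shows "is_tadpole B (\<phi> u) (map_subgraph \<phi> \<psi> T)"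
proof -
  obtain P C where "tadpole_pc A u P C" "T = (fst P \<union> fst C, snd P \<union> snd C)"
    using assms unfolding is_tadpole_def by blast
  then show ?thesis unfolding is_tadpole_def using tadpole_pc_image map_subgraph_Un by metis
qed

lemma tadpole_path_contains_image:
  assumes "tadpole_path_contains A u T f"
  shows "tadpole_path_contains B (\<phi> u) (map_subgraph \<phi> \<psi> T) (\<psi> f)"
proof -
  obtain P C where "tadpole_pc A u P C" "T = (fst P \<union> fst C, snd P \<union> snd C)" "f \<in> snd P"
    using assms unfolding tadpole_path_contains_def by blast
  moreover have "\<psi> f \<in> snd (map_subgraph \<phi> \<psi> P)" using \<open>f \<in> snd P\<close> by (simp add: map_subgraph_def)
  ultimately show ?thesis
    unfolding tadpole_path_contains_def using tadpole_pc_image map_subgraph_Un by metis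
qed

lemma star_cond_image:
  assumes "u' \<in> verts A" "\<forall>T\<in>set ts. is_tadpole A u T" "star_cond A u u' f ts"
  shows "star_cond B (\<phi> u) (\<phi> u') (\<psi> f) (map (map_subgraph \<phi> \<psi>) ts)"
proof -
  have avoid: "\<phi> u' \<notin> fst (map_subgraph \<phi> \<psi> T)" if "T \<in> set ts" "u' \<notin> fst T" for T
    using that assms(1,2) tadpole_subset[of A u T] inj_verts
    by (auto simp: map_subgraph_def inj_on_def)
  obtain T1 T2 where ts: "ts = [T1, T2]" and "(u' \<notin> fst T1 \<and> tadpole_path_contains A u T2 f) \<or>
      (u' \<notin> fst T2 \<and> tadpole_path_contains A u T1 f)"
    using assms(3) unfolding star_cond_def by blast
  then have "(\<phi> u' \<notin> fst (map_subgraph \<phi> \<psi> T1) \<and>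
        tadpole_path_contains B (\<phi> u) (map_subgraph \<phi> \<psi> T2) (\<psi> f)) \<or>
      (\<phi> u' \<notin> fst (map_subgraph \<phi> \<psi> T2) \<and>
        tadpole_path_contains B (\<phi> u) (map_subgraph \<phi> \<psi> T1) (\<psi> f))"
    using avoid[of T1] avoid[of T2] tadpole_path_contains_image ts by (metis list.set_intros(1,2))
  then show ?thesis unfolding star_cond_def ts by simp
qed

end

locale surj_switching_emb = switching_emb +
  assumes edges_onto: "edges B \<subseteq> \<psi> ` edges A"
begin

lemma cover6_image:
  assumes "\<forall>S\<in>set Ss. snd S \<subseteq> edges A" "cover6 A Ss"
  shows "cover6 B (map (map_subgraph \<phi> \<psi>) Ss)"
  unfolding cover6_def
proof
  fix f assume "f \<in> edges B"
  then obtain g where g: "g \<in> edges A" "f = \<psi> g" using edges_onto by blast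
  have "filter (\<lambda>S. f \<in> snd (map_subgraph \<phi> \<psi> S)) Ss = filter (\<lambda>S. g \<in> snd S) Ss"
  proof (rule filter_cong)
    fix S assume "S \<in> set Ss"
    then have "snd S \<subseteq> edges A" using assms(1) by blast
    then show "(f \<in> snd (map_subgraph \<phi> \<psi> S)) = (g \<in> snd S)"
      using g inj_edges by (auto simp: map_subgraph_def inj_on_def)
  qed simp
  then show "length (filter (\<lambda>S. f \<in> snd S) (map (map_subgraph \<phi> \<psi>) Ss)) = 6"
    using assms(2) g unfolding cover6_def by (simp add: filter_map comp_def)
qed

lemma psi_cover_image:
  assumes "psi_cover A a b t pp np tx ty sc"
  shows "\<exists>pp' np'. psi_cover B (\<phi> a) (\<phi> b) t pp' np'
    (map (map_subgraph \<phi> \<psi>) tx) (map (map_subgraph \<phi> \<psi>) ty) (map (map_subgraph \<phi> \<psi>) sc)"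
proof -
  let ?m = "map (map_subgraph \<phi> \<psi>)"
  have paths: "\<forall>P\<in>set (?m ps). is_path B (\<phi> a) (\<phi> b) P \<and> sigma B P = s * (\<tau> a * \<tau> b)"
    if "\<forall>P\<in>set ps. is_path A a b P \<and> sigma A P = s" for ps s
    using that is_path_image by (auto simp: mult.assoc)
  have rest: "\<forall>T\<in>set (?m tx). is_tadpole B (\<phi> a) T" "\<forall>T\<in>set (?m ty). is_tadpole B (\<phi> b) T"
    "\<forall>S\<in>set (?m sc). signed_circuit B S"
    using assms is_tadpole_image signed_circuit_image by (auto simp: psi_cover_def)
  have cov: "cover6 B (?m pp @ ?m np @ ?m tx @ ?m ty @ ?m sc)"
    using cover6_image[OF psi_cover_edges_subset[OF assms]] assms by (simp add: psi_cover_def)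
  have "\<tau> a * \<tau> b = 1 \<or> \<tau> a * \<tau> b = -1"
    using switching_sign[of a] switching_sign[of b] by auto
  then show ?thesis
  proof
    assume "\<tau> a * \<tau> b = 1"
    then have "psi_cover B (\<phi> a) (\<phi> b) t (?m pp) (?m np) (?m tx) (?m ty) (?m sc)"
      using assms paths[of pp 1] paths[of np "-1"] rest cov by (simp add: psi_cover_def)
    then show ?thesis by blast
  next
    assume "\<tau> a * \<tau> b = -1"
    moreover have "cover6 B (?m np @ ?m pp @ ?m tx @ ?m ty @ ?m sc)"
      by (rule cover6_mset_cong[THEN iffD1, OF _ cov]) (simp add: ac_simps)
    ultimately have "psi_cover B (\<phi> a) (\<phi> b) t (?m np) (?m pp) (?m tx) (?m ty) (?m sc)"
      using assms paths[of pp 1] paths[of np "-1"] rest by (simp add: psi_cover_def)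
    then show ?thesis by blast
  qed
qed

lemma has_psi_star2_image:
  assumes "a \<in> verts A" "b \<in> verts A" "has_psi_star2 A a b f"
  shows "has_psi_star2 B (\<phi> a) (\<phi> b) (\<psi> f)"
proof -
  obtain pp np tx ty sc where P: "psi_cover A a b 2 pp np tx ty sc"
    and S: "star_cond A a b f tx" "star_cond A b a f ty"
    using assms(3) unfolding has_psi_star2_def by blast
  obtain pp' np' where "psi_cover B (\<phi> a) (\<phi> b) 2 pp' np'
      (map (map_subgraph \<phi> \<psi>) tx) (map (map_subgraph \<phi> \<psi>) ty) (map (map_subgraph \<phi> \<psi>) sc)"
    using psi_cover_image[OF P] by blast
  moreover have "star_cond B (\<phi> a) (\<phi> b) (\<psi> f) (map (map_subgraph \<phi> \<psi>) tx)"
    "star_cond B (\<phi> b) (\<phi> a) (\<psi> f) (map (map_subgraph \<phi> \<psi>) ty)"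
    using star_cond_image assms(1,2) S P by (simp_all add: psi_cover_def)
  ultimately show ?thesis unfolding has_psi_star2_def by (intro exI conjI)
qed

end

lemma switching_emb_refl: "switching_emb A A id id (\<lambda>_. 1)"
  by unfold_locales auto

lemma switching_emb_switch_at: "switching_emb (switch_at A v) A id id (\<lambda>u. if u = v then -1 else 1)"
proof
  fix f a b assume "f \<in> edges (switch_at A v)" "ends (switch_at A v) f = {a, b}"
  then have ends: "ends A f = {a, b}" by (simp add: switch_at_def)
  show "sgn A (id f) = sgn (switch_at A v) f * (if a = v then -1 else 1) * (if b = v then -1 else 1)"
  proof (cases "a = b")
    case True
    then show ?thesis using ends by (simp add: switch_at_def)
  next
    case False
    then show ?thesis using ends by (auto simp: switch_at_def)
  qed
qed (auto simp: switch_at_def)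

lemma switching_emb_comp:
  assumes "switching_emb A B \<phi> \<psi> \<tau>" "switching_emb B C \<phi>' \<psi>' \<tau>'"
  shows "switching_emb A C (\<phi>' \<circ> \<phi>) (\<psi>' \<circ> \<psi>) (\<lambda>v. \<tau> v * \<tau>' (\<phi> v))"
proof -
  interpret AB: switching_emb A B \<phi> \<psi> \<tau> by fact
  interpret BC: switching_emb B C \<phi>' \<psi>' \<tau>' by fact
  show ?thesis
  proof
    show "inj_on (\<phi>' \<circ> \<phi>) (verts A)"
      using AB.inj_verts AB.verts_into BC.inj_verts by (blast intro: comp_inj_on inj_on_subset)
    show "inj_on (\<psi>' \<circ> \<psi>) (edges A)"
      using AB.inj_edges AB.edges_into BC.inj_edges by (blast intro: comp_inj_on inj_on_subset)
    show "(\<phi>' \<circ> \<phi>) ` verts A \<subseteq> verts C" "(\<psi>' \<circ> \<psi>) ` edges A \<subseteq> edges C"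
      using AB.verts_into BC.verts_into AB.edges_into BC.edges_into by (auto simp: image_subset_iff)
  next
    fix f assume f: "f \<in> edges A"
    then have "\<psi> f \<in> edges B" using AB.edges_into by blast
    then show "ends C ((\<psi>' \<circ> \<psi>) f) = (\<phi>' \<circ> \<phi>) ` ends A f"
      using f AB.ends_image BC.ends_image by (simp add: image_comp)
    fix a b assume "ends A f = {a, b}"
    then have "ends B (\<psi> f) = {\<phi> a, \<phi> b}" using f AB.ends_image by simp
    then show "sgn C ((\<psi>' \<circ> \<psi>) f) = sgn A f * (\<tau> a * \<tau>' (\<phi> a)) * (\<tau> b * \<tau>' (\<phi> b))"
      using \<open>\<psi> f \<in> edges B\<close> BC.sgn_image AB.sgn_image[OF f \<open>ends A f = {a, b}\<close>] by (simp add: ac_simps)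
  next
    fix a show "\<tau> a * \<tau>' (\<phi> a) = 1 \<or> \<tau> a * \<tau>' (\<phi> a) = -1"
      using AB.switching_sign[of a] BC.switching_sign[of "\<phi> a"] by auto
  qed
qed

lemma sw_equiv_frame:
  assumes "sw_equiv A A'"
  shows "verts A' = verts A \<and> edges A' = edges A \<and> ends A' = ends A"
  using assms unfolding sw_equiv_def by (induction rule: rtranclp_induct) (auto simp: switch_at_def)

lemma sw_equiv_switching_emb:
  assumes "sw_equiv A A'"
  obtains \<tau> where "surj_switching_emb A' A id id \<tau>"
proof -
  have "\<exists>\<tau>. switching_emb A' A id id \<tau>"
    using assms unfolding sw_equiv_def
  proof (induction rule: rtranclp_induct)
    case base
    show ?case using switching_emb_refl by blast
  next
    case (step A1 A2)
    then obtain \<tau> v where \<tau>: "switching_emb A1 A id id \<tau>" and A2: "A2 = switch_at A1 v" by blast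
    have "switching_emb A2 A (id \<circ> id) (id \<circ> id) (\<lambda>u. (if u = v then -1 else 1) * \<tau> (id u))"
      unfolding A2 by (rule switching_emb_comp[OF switching_emb_switch_at \<tau>])
    then show ?case unfolding comp_id by blast
  qed
  moreover have "edges A \<subseteq> id ` edges A'" using sw_equiv_frame[OF assms] by simp
  ultimately show ?thesis
    using that by (meson surj_switching_emb.intro surj_switching_emb_axioms.intro)
qed

lemma iso_2t_frame:
  assumes "iso_2t A a b R ra rb" "\<forall>f\<in>edges A. ends A f \<subseteq> verts A" "a \<in> verts A" "b \<in> verts A"
  shows "ra \<in> verts R" "rb \<in> verts R" "\<forall>g\<in>edges R. ends R g \<subseteq> verts R"
proof -
  obtain \<phi> \<psi> where iso: "bij_betw \<phi> (verts A) (verts R)" "bij_betw \<psi> (edges A) (edges R)"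
    "\<forall>f\<in>edges A. ends R (\<psi> f) = \<phi> ` ends A f" "\<phi> a = ra" "\<phi> b = rb"
    using assms(1) unfolding iso_2t_def by blast
  show "ra \<in> verts R" "rb \<in> verts R" using iso assms(3,4) by (auto simp: bij_betw_def)
  show "\<forall>g\<in>edges R. ends R g \<subseteq> verts R"
  proof
    fix g assume "g \<in> edges R"
    then obtain f where "f \<in> edges A" "g = \<psi> f" using iso(2) by (auto simp: bij_betw_def)
    then have "ends R g = \<phi> ` ends A f" "ends A f \<subseteq> verts A" using iso(3) assms(2) by auto
    then show "ends R g \<subseteq> verts R" using iso(1) by (auto simp: bij_betw_def)
  qed
qed

lemma iso_2t_inverse_switching_emb:
  assumes "iso_2t A a b R ra rb" "\<forall>f\<in>edges A. ends A f \<subseteq> verts A" "a \<in> verts A" "b \<in> verts A"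
  obtains \<phi> \<psi> where "surj_switching_emb R A \<phi> \<psi> (\<lambda>_. 1)" "\<phi> ra = a" "\<phi> rb = b"
proof -
  obtain \<phi>0 \<psi>0 where iso: "bij_betw \<phi>0 (verts A) (verts R)" "bij_betw \<psi>0 (edges A) (edges R)"
    "\<forall>f\<in>edges A. ends R (\<psi>0 f) = \<phi>0 ` ends A f \<and> sgn R (\<psi>0 f) = sgn A f" "\<phi>0 a = ra" "\<phi>0 b = rb"
    using assms(1) unfolding iso_2t_def by blast
  define \<phi> where "\<phi> = inv_into (verts A) \<phi>0"
  define \<psi> where "\<psi> = inv_into (edges A) \<psi>0"
  have bij: "bij_betw \<phi> (verts R) (verts A)" "bij_betw \<psi> (edges R) (edges A)"
    unfolding \<phi>_def \<psi>_def using iso(1,2) by (simp_all add: bij_betw_inv_into)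
  have inv: "\<phi> (\<phi>0 v) = v" if "v \<in> verts A" for v
    unfolding \<phi>_def using iso(1) that by (simp add: bij_betw_def inv_into_f_f)
  have ends: "ends A (\<psi> g) = \<phi> ` ends R g \<and> sgn A (\<psi> g) = sgn R g" if "g \<in> edges R" for g
  proof -
    have "\<psi> g \<in> edges A" "\<psi>0 (\<psi> g) = g"
      using that iso(2) bij(2) unfolding \<psi>_def by (auto simp: bij_betw_def f_inv_into_f)
    moreover from this(1) have "\<phi> ` \<phi>0 ` ends A (\<psi> g) = ends A (\<psi> g)"
      using assms(2) inv by (force simp: image_comp)
    ultimately show ?thesis using iso(3) by metis
  qed
  have "surj_switching_emb R A \<phi> \<psi> (\<lambda>_. 1)"
    by unfold_locales (use bij ends in \<open>auto simp: bij_betw_def\<close>)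
  moreover have "\<phi> ra = a" "\<phi> rb = b" using inv iso(4,5) assms(3,4) by auto
  ultimately show ?thesis using that by blast
qed

lemma surj_switching_emb_comp:
  assumes "surj_switching_emb A B \<phi> \<psi> \<tau>" "surj_switching_emb B C \<phi>' \<psi>' \<tau>'"
  shows "surj_switching_emb A C (\<phi>' \<circ> \<phi>) (\<psi>' \<circ> \<psi>) (\<lambda>v. \<tau> v * \<tau>' (\<phi> v))"
proof -
  interpret AB: surj_switching_emb A B \<phi> \<psi> \<tau> by fact
  interpret BC: surj_switching_emb B C \<phi>' \<psi>' \<tau>' by fact
  have "switching_emb A C (\<phi>' \<circ> \<phi>) (\<psi>' \<circ> \<psi>) (\<lambda>v. \<tau> v * \<tau>' (\<phi> v))"
    using switching_emb_comp AB.switching_emb_axioms BC.switching_emb_axioms by blast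
  moreover have "edges C \<subseteq> \<psi>' ` \<psi> ` edges A"
    using AB.edges_onto BC.edges_onto by (meson image_mono order_trans)
  then have "edges C \<subseteq> (\<psi>' \<circ> \<psi>) ` edges A" by (simp add: image_comp)
  ultimately show ?thesis by (simp add: surj_switching_emb_def surj_switching_emb_axioms_def)
qed

section \<open>Joining a new vertex to the ends of an edge\<close>

text \<open>In the paper's notation, \<open>join_vertex H x y z f1 f2 s1 s2\<close> is \<open>P(H \<union> yz, xz)\<close> with
  f1 = yz and f2 = xz.\<close>

definition join_vertex :: "('v,'e) sgraph \<Rightarrow> 'v \<Rightarrow> 'v \<Rightarrow> 'v \<Rightarrow> 'e \<Rightarrow> 'e \<Rightarrow> int \<Rightarrow> int \<Rightarrow> ('v,'e) sgraph" where
  "join_vertex H x y z f1 f2 s1 s2 = \<lparr>verts = insert z (verts H), edges = insert f1 (insert f2 (edges H)),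
     ends = (ends H)(f1 := {y, z}, f2 := {x, z}), sgn = (sgn H)(f1 := s1, f2 := s2)\<rparr>"

lemma join_vertex_simps:
  "verts (join_vertex H x y z f1 f2 s1 s2) = insert z (verts H)"
  "edges (join_vertex H x y z f1 f2 s1 s2) = insert f1 (insert f2 (edges H))"
  "ends (join_vertex H x y z f1 f2 s1 s2) = (ends H)(f1 := {y, z}, f2 := {x, z})"
  "sgn (join_vertex H x y z f1 f2 s1 s2) = (sgn H)(f1 := s1, f2 := s2)"
  by (simp_all add: join_vertex_def)

text \<open>The new vertex c receives the switching sign that makes the edge bc come out right; the
  edge ac then comes out right by the hypothesis on \<open>u1 * u2\<close>, which says that the triangles
  through c on both sides have the same sign after switching.\<close>

lemma switching_sign_join_vertex:
  fixes t1 t2 u1 u2 :: int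
  assumes "a \<noteq> c" "b \<noteq> c" "t1 \<in> {1, -1}" "u1 \<in> {1, -1}" "\<tau> b \<in> {1, -1}"
    "u1 * u2 = t1 * t2 * \<tau> a * \<tau> b"
  shows "{b, c} = {p, q} \<Longrightarrow> u1 = t1 * (\<tau>(c := u1 * t1 * \<tau> b)) p * (\<tau>(c := u1 * t1 * \<tau> b)) q"
    and "{a, c} = {p, q} \<Longrightarrow> u2 = t2 * (\<tau>(c := u1 * t1 * \<tau> b)) p * (\<tau>(c := u1 * t1 * \<tau> b)) q"
proof -
  have sq: "t1 * t1 = 1" "u1 * u1 = 1" "\<tau> b * \<tau> b = 1" using assms(3-5) by auto
  show "{b, c} = {p, q} \<Longrightarrow> u1 = t1 * (\<tau>(c := u1 * t1 * \<tau> b)) p * (\<tau>(c := u1 * t1 * \<tau> b)) q"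
    using assms(2) sq by (auto simp: doubleton_eq_iff ac_simps)
  have "u2 = u1 * (u1 * u2)" using sq(2) by (simp add: mult.assoc[symmetric])
  also have "\<dots> = u1 * t1 * t2 * \<tau> a * \<tau> b" using assms(6) by (simp add: ac_simps)
  finally show "{a, c} = {p, q} \<Longrightarrow> u2 = t2 * (\<tau>(c := u1 * t1 * \<tau> b)) p * (\<tau>(c := u1 * t1 * \<tau> b)) q"
    using assms(1) by (auto simp: doubleton_eq_iff ac_simps)
qed

lemma surj_switching_emb_join_vertex:
  assumes emb: "surj_switching_emb A B \<phi> \<psi> \<tau>" and ends_A: "\<forall>f\<in>edges A. ends A f \<subseteq> verts A"
    and ab: "a \<in> verts A" "b \<in> verts A" and c: "c \<notin> verts A" "c' \<notin> verts B"
    and g: "g1 \<notin> edges A" "g2 \<notin> edges A" "g1 \<noteq> g2"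
    and g': "g1' \<notin> edges B" "g2' \<notin> edges B" "g1' \<noteq> g2'"
    and signs: "t1 \<in> {1, -1}" "u1 \<in> {1, -1}" "u1 * u2 = t1 * t2 * \<tau> a * \<tau> b"
  shows "surj_switching_emb (join_vertex A a b c g1 g2 t1 t2) (join_vertex B (\<phi> a) (\<phi> b) c' g1' g2' u1 u2)
    (\<phi>(c := c')) (\<psi>(g1 := g1', g2 := g2')) (\<tau>(c := u1 * t1 * \<tau> b))"
    (is "surj_switching_emb ?A ?B ?\<phi> ?\<psi> ?\<tau>")
proof -
  interpret surj_switching_emb A B \<phi> \<psi> \<tau> by fact
  have old_ends: "ends ?B (?\<psi> f) = ?\<phi> ` ends ?A f" if f: "f \<in> edges A" for f
  proof -
    have "\<psi> f \<in> edges B" "c \<notin> ends A f" using f edges_into ends_A c(1) by auto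
    then show ?thesis using f g g' ends_image[OF f] by (auto simp: join_vertex_simps)
  qed
  have old_sgn: "sgn ?B (?\<psi> f) = sgn ?A f * ?\<tau> p * ?\<tau> q" if f: "f \<in> edges A" "ends A f = {p, q}" for f p q
  proof -
    have "\<psi> f \<in> edges B" "p \<noteq> c" "q \<noteq> c" using f edges_into ends_A c(1) by auto
    then show ?thesis using f g g' sgn_image[OF f] by (auto simp: join_vertex_simps)
  qed
  have "a \<noteq> c" "b \<noteq> c" "\<tau> b \<in> {1, -1}" using ab c(1) switching_sign[of b] by auto
  note new_sgn = switching_sign_join_vertex[OF this(1,2) signs(1,2) this(3) signs(3)]
  show ?thesis
  proof
    have "c' \<notin> \<phi> ` verts A" using verts_into c(2) by blast
    then show "inj_on ?\<phi> (verts ?A)"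
      using inj_on_fun_updI[OF inj_verts] c(1) by (auto simp: join_vertex_simps)
    show "?\<phi> ` verts ?A \<subseteq> verts ?B"
      using verts_into c(1) by (auto simp: join_vertex_simps)
    show "inj_on ?\<psi> (edges ?A)"
      using inj_edges edges_into g g' by (auto simp: join_vertex_simps inj_on_def)
    show "?\<psi> ` edges ?A \<subseteq> edges ?B"
      using edges_into g by (auto simp: join_vertex_simps)
    show "edges ?B \<subseteq> ?\<psi> ` edges ?A"
      using edges_onto g by (auto simp: join_vertex_simps)
  next
    fix f assume "f \<in> edges ?A"
    then consider "f = g1" | "f = g2" | "f \<in> edges A" "f \<noteq> g1" "f \<noteq> g2"
      by (auto simp: join_vertex_simps)
    note cases = this
    then show "ends ?B (?\<psi> f) = ?\<phi> ` ends ?A f"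
    proof cases
      case 1
      then show ?thesis using g g' ab(2) c(1) by (auto simp: join_vertex_simps)
    next
      case 2
      then show ?thesis using g g' ab(1) c(1) by (auto simp: join_vertex_simps)
    next
      case 3
      then show ?thesis by (intro old_ends)
    qed
    fix p q assume pq: "ends ?A f = {p, q}"
    from cases show "sgn ?B (?\<psi> f) = sgn ?A f * ?\<tau> p * ?\<tau> q"
    proof cases
      case 1
      then show ?thesis using pq new_sgn(1) g g' by (simp add: join_vertex_simps)
    next
      case 2
      then show ?thesis using pq new_sgn(2) g g' by (simp add: join_vertex_simps)
    next
      case 3
      then have "ends A f = {p, q}" using pq by (simp add: join_vertex_simps)
      then show ?thesis using old_sgn 3 by blast
    qed
  next
    fix v show "?\<tau> v = 1 \<or> ?\<tau> v = -1"
      using switching_sign[of v] switching_sign[of b] signs(1,2) by auto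
  qed
qed

section \<open>Extending a \<open>\<Psi>\<^sup>*\<close>-cover of H\<close>

locale join_vertex_setting =
  fixes H :: "('v,'e) sgraph" and x y z :: 'v and e f1 f2 :: 'e and s1 s2 :: int
  assumes wf: "wf_sgraph H"
    and x: "x \<in> verts H" and y: "y \<in> verts H" and xy: "x \<noteq> y"
    and e: "e \<in> edges H" and ends_e: "ends H e = {x, y}"
    and z: "z \<notin> verts H"
    and f1: "f1 \<notin> edges H" and f2: "f2 \<notin> edges H" and f12: "f1 \<noteq> f2"
    and s1: "s1 \<in> {1, -1}" and s2: "s2 \<in> {1, -1}"
    and unbalanced_triangle: "sgn H e * s1 * s2 = -1"
begin

abbreviation G where "G \<equiv> join_vertex H x y z f1 f2 s1 s2"

lemma sgn_e: "sgn H e = 1 \<or> sgn H e = -1"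
  using wf e unfolding wf_sgraph_def by auto

lemma ends_subset: "f \<in> edges H \<Longrightarrow> ends H f \<subseteq> verts H"
  using wf unfolding wf_sgraph_def by blast

lemma G_simps:
  "verts G = insert z (verts H)" "edges G = insert f1 (insert f2 (edges H))"
  "ends G f1 = {y, z}" "sgn G f1 = s1" "ends G f2 = {x, z}" "sgn G f2 = s2"
  "f \<in> edges H \<Longrightarrow> ends G f = ends H f" "f \<in> edges H \<Longrightarrow> sgn G f = sgn H f"
  using f1 f2 f12 by (auto simp: join_vertex_simps)

lemma in_G: "x \<in> verts G" "y \<in> verts G" "z \<in> verts G" "e \<in> edges G" "f1 \<in> edges G" "f2 \<in> edges G"
  using x y e by (auto simp: G_simps)

lemma distinct_new: "x \<noteq> z" "y \<noteq> z" "e \<noteq> f1" "e \<noteq> f2"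
  using x y z e f1 f2 by auto

sublocale H_in_G: switching_emb H G id id "\<lambda>_. 1"
  by unfold_locales (auto simp: G_simps)

lemma sign_relation: "sgn H e * s1 = - s2" "s1 * s2 = - sgn H e"
  using unbalanced_triangle s1 s2 sgn_e by auto

definition extend_f1 :: "('v,'e) subgraph \<Rightarrow> ('v,'e) subgraph" where
  "extend_f1 S = (insert z (fst S), insert f1 (snd S))"

definition extend_f2 :: "('v,'e) subgraph \<Rightarrow> ('v,'e) subgraph" where
  "extend_f2 S = (insert z (fst S), insert f2 (snd S))"

definition extend_f1f2 :: "('v,'e) subgraph \<Rightarrow> ('v,'e) subgraph" where
  "extend_f1f2 S = (insert z (fst S), insert f1 (insert f2 (snd S)))"

lemma path_seq_extend_f1:
  assumes "path_seq H vs es" "last vs = y"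
  shows "path_seq G (vs @ [z]) (es @ [f1])"
proof -
  have "z \<notin> set vs" "f1 \<notin> set es" using path_seq_subset[OF assms(1)] z f1 by auto
  then show ?thesis
    using path_seq_snoc[OF H_in_G.path_seq_image[OF assms(1)]] in_G(3,5) assms(2) by (simp add: G_simps)
qed

lemma is_path_extend_f1:
  assumes "is_path H x y P" "sigma H P = sgn H e"
  shows "is_path G x z (extend_f1 P)" "sigma G (extend_f1 P) = - s2"
proof -
  obtain vs es where V: "path_seq H vs es" "hd vs = x" "last vs = y" "P = (set vs, set es)"
    using assms(1) unfolding is_path_def by blast
  have "vs \<noteq> []" using V(1) by (rule path_seq_not_Nil)
  then show "is_path G x z (extend_f1 P)"
    using is_pathI[OF path_seq_extend_f1[OF V(1,3)]] V by (simp add: extend_f1_def)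
  have "f1 \<notin> set es" using path_seq_subset[OF V(1)] f1 by blast
  then have "sigma G (extend_f1 P) = s1 * sigma G P"
    using V(4) by (simp add: extend_f1_def sigma_def G_simps)
  also have "sigma G P = sgn H e" using H_in_G.is_path_image(2)[OF assms(1)] assms(2) by simp
  finally show "sigma G (extend_f1 P) = - s2" using sign_relation by (simp add: mult.commute)
qed

lemma is_path_f2: "is_path G x z ({x, z}, {f2})" "sigma G ({x, z}, {f2}) = s2"
proof -
  have "path_seq G [x, z] [f2]"
    using in_G distinct_new by (simp add: path_seq_Cons path_seq_Nil G_simps)
  then show "is_path G x z ({x, z}, {f2})" using is_pathI by fastforce
  show "sigma G ({x, z}, {f2}) = s2" by (simp add: sigma_def G_simps)
qed

lemma e_notin_opposite_path:
  assumes "is_path H x y P" "sigma H P = - sgn H e"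
  shows "e \<notin> snd P"
proof
  assume "e \<in> snd P"
  obtain vs es where V: "path_seq H vs es" "hd vs = x" "last vs = y" "P = (set vs, set es)"
    using assms(1) unfolding is_path_def by blast
  obtain vs' es' where Q: "vs = x # vs'" "es = e # es'" "hd vs' = y"
    using path_seq_starting_edge[OF V(1,2), of e y] \<open>e \<in> snd P\<close> V(4) ends_e xy by auto
  have P': "path_seq H vs' es'" using V(1) Q by (simp add: path_seq_Cons)
  have "es' = []"
  proof (rule ccontr)
    assume "es' \<noteq> []"
    then have "length vs' \<ge> 2" "distinct vs'" using P' by (cases es'; simp add: path_seq_def)+
    then have "hd vs' \<noteq> last vs'" by (cases vs') auto
    moreover have "last vs' = y" using V(3) Q(1) path_seq_not_Nil[OF P'] by simp
    ultimately show False using Q(3) by simp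
  qed
  then have "sigma H P = sgn H e" using V(4) Q(2) by (simp add: sigma_def)
  then show False using assms(2) sgn_e by auto
qed

lemma is_tadpole_add_e:
  assumes "is_path H x y P" "sigma H P = - sgn H e"
  shows "is_tadpole G x (fst P, insert e (snd P))"
proof -
  obtain vs es where V: "path_seq H vs es" "hd vs = x" "last vs = y" "P = (set vs, set es)"
    using assms(1) unfolding is_path_def by blast
  have "vs \<noteq> []" using V(1) by (rule path_seq_not_Nil)
  have e_P: "e \<notin> set es" using e_notin_opposite_path[OF assms] V(4) by simp
  have "is_circuit G (set vs, insert e (set es))"
    using is_circuit_closed_path[OF H_in_G.path_seq_image[OF V(1)] in_G(4)] e_P V
    by (simp add: G_simps e ends_e insert_commute)
  moreover have "sigma G (set vs, insert e (set es)) = -1"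
    using e_P H_in_G.is_path_image(2)[OF assms(1)] assms(2) V(4) sgn_e
    by (auto simp: sigma_def G_simps e)
  ultimately have C: "unbalanced_circuit G (set vs, insert e (set es))"
    unfolding unbalanced_circuit_def by simp
  have "is_path G x x ({x}, {})"
    using is_pathI[of G "[x]" "[]"] in_G by (simp add: path_seq_Nil)
  moreover have "x \<in> set vs" using V(2) \<open>vs \<noteq> []\<close> by auto
  ultimately have "tadpole_pc G x ({x}, {}) (set vs, insert e (set es))"
    unfolding tadpole_pc_def using C by auto
  then show ?thesis
    unfolding is_tadpole_def using V(4) \<open>x \<in> set vs\<close> by fastforce
qed

lemma balanced_circuit_extend_f1f2:
  assumes "is_path H x y P" "sigma H P = - sgn H e"
  shows "balanced_circuit G (extend_f1f2 P)"
proof -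
  obtain vs es where V: "path_seq H vs es" "hd vs = x" "last vs = y" "P = (set vs, set es)"
    using assms(1) unfolding is_path_def by blast
  have "vs \<noteq> []" using V(1) by (rule path_seq_not_Nil)
  have sub: "set es \<subseteq> edges H" using path_seq_subset[OF V(1)] by blast
  then have f: "f1 \<notin> set es" "f2 \<notin> set es" using f1 f2 by auto
  have "is_circuit G (set (vs @ [z]), insert f2 (set (es @ [f1])))"
    using is_circuit_closed_path[OF path_seq_extend_f1[OF V(1,3)] in_G(6)] f f12 V(2) \<open>vs \<noteq> []\<close>
    by (simp add: G_simps insert_commute)
  moreover have "sigma G (extend_f1f2 P) = s2 * (s1 * sigma G P)"
    using f f12 sub V(4) by (simp add: extend_f1f2_def sigma_def G_simps)
  moreover have "sigma G P = - sgn H e" using H_in_G.is_path_image(2)[OF assms(1)] assms(2) by simp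
  ultimately show ?thesis
    using V(4) sign_relation sgn_e unfolding balanced_circuit_def extend_f1f2_def
    by (auto simp: insert_commute algebra_simps)
qed

lemma tadpole_pc_prefix:
  assumes T: "tadpole_pc H u P C" and f: "f \<in> {f1, f2}" "ends G f = {z, u}"
  shows "tadpole_pc G z (insert z (fst P), insert f (snd P)) C"
proof -
  obtain w where W: "is_path H u w P" "unbalanced_circuit H C" "fst P \<inter> fst C = {w}"
    using T unfolding tadpole_pc_def by blast
  obtain vs es where V: "path_seq H vs es" "hd vs = u" "last vs = w" "P = (set vs, set es)"
    using W(1) unfolding is_path_def by blast
  have "vs \<noteq> []" using V(1) by (rule path_seq_not_Nil)
  have new: "z \<notin> set vs" "f \<notin> set es" "f \<in> edges G"
    using path_seq_subset[OF V(1)] z f(1) f1 f2 in_G by auto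
  then have "path_seq G (z # vs) (f # es)"
    using H_in_G.path_seq_image[OF V(1)] in_G(3) f(2) V(2) by (simp add: path_seq_Cons)
  then have "is_path G z w (insert z (fst P), insert f (snd P))"
    using is_pathI \<open>vs \<noteq> []\<close> V(3,4) by fastforce
  moreover have "insert z (fst P) \<inter> fst C = {w}"
    using W(3) z unbalanced_circuit_subset[OF W(2)] by auto
  ultimately show ?thesis
    unfolding tadpole_pc_def using H_in_G.unbalanced_circuit_image[OF W(2)] by auto
qed

lemma is_tadpole_extend_f1:
  assumes "is_tadpole H y T"
  shows "is_tadpole G z (extend_f1 T)"
proof -
  obtain P C where TP: "tadpole_pc H y P C" and T: "T = (fst P \<union> fst C, snd P \<union> snd C)"
    using assms unfolding is_tadpole_def by blast
  from TP have "tadpole_pc G z (insert z (fst P), insert f1 (snd P)) C"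
    by (rule tadpole_pc_prefix) (simp_all add: G_simps insert_commute)
  then show ?thesis unfolding is_tadpole_def extend_f1_def T
    by (intro exI[of _ "(insert z (fst P), insert f1 (snd P))"] exI[of _ C]) auto
qed

lemma tadpole_path_contains_extend_f2:
  assumes "is_tadpole H x T"
  shows "tadpole_path_contains G z (extend_f2 T) f2"
proof -
  obtain P C where TP: "tadpole_pc H x P C" and T: "T = (fst P \<union> fst C, snd P \<union> snd C)"
    using assms unfolding is_tadpole_def by blast
  from TP have "tadpole_pc G z (insert z (fst P), insert f2 (snd P)) C"
    by (rule tadpole_pc_prefix) (simp_all add: G_simps insert_commute)
  then show ?thesis unfolding tadpole_path_contains_def extend_f2_def T
    by (intro exI[of _ "(insert z (fst P), insert f2 (snd P))"] exI[of _ C]) auto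
qed

text \<open>The tadpole-path starts with e = xy, which is replaced by x z y.\<close>

lemma tadpole_reroute_e:
  assumes "tadpole_path_contains H x T e"
  obtains T' where "tadpole_path_contains G x T' f2" "e \<notin> snd T'" "f1 \<in> snd T'" "f2 \<in> snd T'"
    "\<And>g. g \<notin> {e, f1, f2} \<Longrightarrow> g \<in> snd T' \<longleftrightarrow> g \<in> snd T"
proof -
  obtain vs es C w where V: "path_seq H vs es" "hd vs = y" "last vs = w" "x \<notin> set vs" "e \<notin> set es"
    and C: "unbalanced_circuit H C" "set vs \<inter> fst C = {w}" "x \<notin> fst C" "e \<notin> snd C"
    and T: "T = (insert x (set vs) \<union> fst C, insert e (set es) \<union> snd C)"
    by (rule tadpole_path_contains_first_edge[OF assms ends_e xy])
  have "vs \<noteq> []" using V(1) by (rule path_seq_not_Nil)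
  have sub: "set vs \<subseteq> verts H" "set es \<subseteq> edges H" using path_seq_subset[OF V(1)] by auto
  have new: "z \<notin> set vs" "f1 \<notin> set es" "f2 \<notin> set es" using sub z f1 f2 by auto
  have "path_seq G (z # vs) (f1 # es)"
    using H_in_G.path_seq_image[OF V(1)] new in_G V(2) by (simp add: path_seq_Cons G_simps insert_commute)
  then have "path_seq G (x # z # vs) (f2 # f1 # es)"
    using new V(4) in_G distinct_new f12 by (simp add: path_seq_Cons G_simps)
  then have P: "is_path G x w (insert x (insert z (set vs)), insert f2 (insert f1 (set es)))"
    using is_pathI V(3) \<open>vs \<noteq> []\<close> by fastforce
  moreover have "insert x (insert z (set vs)) \<inter> fst C = {w}"
    using C(2,3) unbalanced_circuit_subset[OF C(1)] z by auto
  ultimately have "tadpole_pc G x (insert x (insert z (set vs)), insert f2 (insert f1 (set es))) C"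
    unfolding tadpole_pc_def using H_in_G.unbalanced_circuit_image[OF C(1)] by auto
  then have "tadpole_path_contains G x (insert x (insert z (set vs)) \<union> fst C,
      insert f2 (insert f1 (set es)) \<union> snd C) f2"
    unfolding tadpole_path_contains_def
    by (intro exI[of _ "(insert x (insert z (set vs)), insert f2 (insert f1 (set es)))"] exI[of _ C]) simp
  then show ?thesis
    by (rule that) (use T V(5) C(4) distinct_new in auto)
qed

lemma unbalanced_circuit_triangle: "unbalanced_circuit G ({x, y, z}, {e, f1, f2})"
proof -
  have "path_seq G [x, y, z] [e, f1]"
    using in_G distinct_new xy by (simp add: path_seq_Cons path_seq_Nil G_simps e ends_e)
  then have "is_circuit G (set [x, y, z], insert f2 (set [e, f1]))"
    by (rule is_circuit_closed_path) (use in_G distinct_new f12 in \<open>simp_all add: G_simps insert_commute\<close>)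
  moreover have "sigma G ({x, y, z}, {e, f1, f2}) = sgn H e * s1 * s2"
    using distinct_new f12 by (simp add: sigma_def G_simps e)
  ultimately show ?thesis
    using unbalanced_triangle unfolding unbalanced_circuit_def by (simp add: insert_commute)
qed

lemma barbell_extend_f1f2:
  assumes "tadpole_path_contains H y T e"
  shows "is_barbell G (extend_f1f2 T)"
proof -
  obtain vs es C w where V: "path_seq H vs es" "hd vs = x" "last vs = w" "y \<notin> set vs" "e \<notin> set es"
    and C: "unbalanced_circuit H C" "set vs \<inter> fst C = {w}" "y \<notin> fst C" "e \<notin> snd C"
    and T: "T = (insert y (set vs) \<union> fst C, insert e (set es) \<union> snd C)"
    by (rule tadpole_path_contains_first_edge[OF assms _ xy[symmetric]]) (simp add: ends_e insert_commute)
  define D where "D = ({x, y, z}, {e, f1, f2})"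
  have "vs \<noteq> []" using V(1) by (rule path_seq_not_Nil)
  then have "x \<in> set vs" using V(2) by auto
  have sub: "set vs \<subseteq> verts H" "fst C \<subseteq> verts H" "snd C \<subseteq> edges H"
    using path_seq_subset[OF V(1)] unbalanced_circuit_subset[OF C(1)] by auto
  have circuits: "unbalanced_circuit G D" "unbalanced_circuit G C" "snd D \<inter> snd C = {}"
    using unbalanced_circuit_triangle H_in_G.unbalanced_circuit_image[OF C(1)] C(4) sub f1 f2
    unfolding D_def by auto
  have T': "extend_f1f2 T = (fst D \<union> fst C \<union> set vs, snd D \<union> snd C \<union> set es)"
    using T \<open>x \<in> set vs\<close> unfolding extend_f1f2_def D_def by auto
  show ?thesis
  proof (cases "es = []")
    case True
    then have "vs = [x]" using V(1,2) by (cases vs) (auto simp: path_seq_def)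
    then have "fst D \<inter> fst C = {x}" "set vs = {x}" "set es = {}"
      using V(3) C(2,3) sub z True unfolding D_def by auto
    then show ?thesis
      unfolding is_barbell_def T' using circuits by (intro exI[of _ D] exI[of _ C] exI[of _ "({x}, {})"]) simp
  next
    case False
    then have "length vs \<ge> 2" "distinct vs" using V(1) by (cases es; simp add: path_seq_def)+
    then have "hd vs \<noteq> last vs" by (cases vs) auto
    then have "x \<noteq> w" using V(2,3) by simp
    then have "x \<notin> fst C" using C(2) \<open>x \<in> set vs\<close> by auto
    then have "fst D \<inter> fst C = {}" "set vs \<inter> (fst D \<union> fst C) = {x, w}"
      using C(2,3) V(4) sub z \<open>x \<in> set vs\<close> unfolding D_def by auto
    moreover have "is_path G x w (set vs, set es)"
      using is_pathI[OF H_in_G.path_seq_image[OF V(1)]] V(2,3) by simp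
    moreover have "w \<in> fst C" using C(2) by blast
    ultimately have "fst D \<inter> fst C = {} \<and> (\<exists>a b. a \<in> fst D \<and> b \<in> fst C \<and>
        is_path G a b (set vs, set es) \<and> fst (set vs, set es) \<inter> (fst D \<union> fst C) = {a, b})"
      by (intro conjI exI[of _ x] exI[of _ w]) (simp_all add: D_def)
    then show ?thesis
      unfolding is_barbell_def T' using circuits by (intro exI[of _ D] exI[of _ C] exI[of _ "(set vs, set es)"]) simp
  qed
qed

lemma psi_star2_normal_form:
  assumes "has_psi_star2 H x y e"
  obtains P1 P2 N1 N2 Ta Tb Ua Ub sc where
    "\<forall>P\<in>{P1, P2}. is_path H x y P \<and> sigma H P = sgn H e"
    "\<forall>P\<in>{N1, N2}. is_path H x y P \<and> sigma H P = - sgn H e"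
    "is_tadpole H x Ta" "y \<notin> fst Ta" "tadpole_path_contains H x Tb e"
    "is_tadpole H y Ua" "x \<notin> fst Ua" "tadpole_path_contains H y Ub e"
    "\<forall>S\<in>set sc. signed_circuit H S" "cover6 H ([P1, P2, N1, N2, Ta, Tb, Ua, Ub] @ sc)"
proof -
  obtain pp np tx ty sc where P: "psi_cover H x y 2 pp np tx ty sc"
    and S: "star_cond H x y e tx" "star_cond H y x e ty"
    using assms unfolding has_psi_star2_def by blast
  obtain p1 p2 n1 n2 where pn: "pp = [p1, p2]" "np = [n1, n2]"
    using P unfolding psi_cover_def by (auto simp: numeral_2_eq_2 length_Suc_conv)
  obtain Ta Tb where Tab: "mset tx = mset [Ta, Tb]" "set tx = {Ta, Tb}" "y \<notin> fst Ta"
      "tadpole_path_contains H x Tb e"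
    using S(1) by (rule star_condE)
  obtain Ua Ub where Uab: "mset ty = mset [Ua, Ub]" "set ty = {Ua, Ub}" "x \<notin> fst Ua"
      "tadpole_path_contains H y Ub e"
    using S(2) by (rule star_condE)
  have cov: "cover6 H (pp @ np @ tx @ ty @ sc)" and sc: "\<forall>S\<in>set sc. signed_circuit H S"
    and tad: "is_tadpole H x Ta" "is_tadpole H y Ua"
    using P Tab(2) Uab(2) by (auto simp: psi_cover_def)
  have cover_as: "cover6 H ([P1, P2, N1, N2, Ta, Tb, Ua, Ub] @ sc)"
    if "mset [P1, P2] + mset [N1, N2] = mset pp + mset np" for P1 P2 N1 N2
  proof (rule cover6_mset_cong[THEN iffD1, OF _ cov])
    have "[P1, P2, N1, N2, Ta, Tb, Ua, Ub] @ sc = [P1, P2] @ [N1, N2] @ [Ta, Tb] @ [Ua, Ub] @ sc" by simp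
    then show "mset (pp @ np @ tx @ ty @ sc) = mset ([P1, P2, N1, N2, Ta, Tb, Ua, Ub] @ sc)"
      by (simp only: mset_append add.assoc[symmetric] that Tab(1) Uab(1))
  qed
  show ?thesis
  proof (cases "sgn H e = 1")
    case True
    then show ?thesis
      using that[of p1 p2 n1 n2] P pn Tab Uab tad sc cover_as[of p1 p2 n1 n2] by (simp add: psi_cover_def)
  next
    case False
    then have "sgn H e = -1" using sgn_e by simp
    moreover have "mset [n1, n2] + mset [p1, p2] = mset pp + mset np" using pn by (metis add.commute)
    ultimately show ?thesis
      using that[of n1 n2 p1 p2] P pn Tab Uab tad sc cover_as[of n1 n2 p1 p2] by (simp add: psi_cover_def)
  qed
qed

text \<open>On every old edge other than e, each new member agrees with the old member it comes from;
  on e, the tadpole obtained by closing N1 with e takes over the role of Tb.\<close>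

lemma cover6_join_vertex:
  assumes cov: "cover6 H ([P1, P2, N1, N2, Ta, Tb, Ua, Ub] @ sc)"
    and sub: "\<forall>S\<in>set ([P1, P2, N1, N2, Ta, Tb, Ua, Ub] @ sc). snd S \<subseteq> edges H"
    and e_in: "e \<notin> snd N1" "e \<notin> snd Ta" "e \<notin> snd Ua" "e \<in> snd Tb"
    and Xb: "e \<notin> snd Xb" "f1 \<in> snd Xb" "f2 \<in> snd Xb" "\<And>g. g \<notin> {e, f1, f2} \<Longrightarrow> g \<in> snd Xb \<longleftrightarrow> g \<in> snd Tb"
  shows "cover6 G ([extend_f1 P1, extend_f1 P2, ({x, z}, {f2}), ({x, z}, {f2}), (fst N1, insert e (snd N1)), Xb,
    extend_f1 Ua, extend_f2 Ta, extend_f1f2 Ub, extend_f1f2 N2] @ sc)"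
    (is "cover6 G ?L")
  unfolding cover6_def
proof
  fix g assume "g \<in> edges G"
  have new: "f \<notin> snd S" if "f \<notin> edges H" "S \<in> set ([P1, P2, N1, N2, Ta, Tb, Ua, Ub] @ sc)" for f S
    using that sub by blast
  have sc_new: "filter (\<lambda>S. f \<in> snd S) sc = []" if "f \<notin> edges H" for f
    using new[OF that] by (auto simp: filter_empty_conv)
  consider "g = f1" | "g = f2" | "g = e" | "g \<in> edges H" "g \<notin> {e, f1, f2}"
    using \<open>g \<in> edges G\<close> by (auto simp: G_simps)
  then show "length (filter (\<lambda>S. g \<in> snd S) ?L) = 6"
  proof cases
    case 1
    then show ?thesis using new[OF f1] sc_new[OF f1] Xb f12 distinct_new
      by (simp add: extend_f1_def extend_f2_def extend_f1f2_def)
  next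
    case 2
    then show ?thesis using new[OF f2] sc_new[OF f2] Xb f12 distinct_new
      by (simp add: extend_f1_def extend_f2_def extend_f1f2_def)
  next
    case 3
    have "length (filter (\<lambda>S. e \<in> snd S) ([P1, P2, N1, N2, Ta, Tb, Ua, Ub] @ sc)) = 6"
      using cov e unfolding cover6_def by blast
    then show ?thesis using 3 e_in Xb(1) distinct_new
      by (simp add: extend_f1_def extend_f2_def extend_f1f2_def split: if_split_asm)
  next
    case 4
    have "length (filter (\<lambda>S. g \<in> snd S) ([P1, P2, N1, N2, Ta, Tb, Ua, Ub] @ sc)) = 6"
      using cov 4(1) unfolding cover6_def by blast
    then show ?thesis using 4(2) Xb(4)[OF 4(2)]
      by (simp add: extend_f1_def extend_f2_def extend_f1f2_def split: if_split_asm)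
  qed
qed

theorem has_psi_star2_join_vertex:
  assumes "has_psi_star2 H x y e"
  shows "has_psi_star2 G x z f2"
proof -
  obtain P1 P2 N1 N2 Ta Tb Ua Ub sc where P: "\<forall>P\<in>{P1, P2}. is_path H x y P \<and> sigma H P = sgn H e"
    and N: "\<forall>P\<in>{N1, N2}. is_path H x y P \<and> sigma H P = - sgn H e"
    and T: "is_tadpole H x Ta" "y \<notin> fst Ta" "tadpole_path_contains H x Tb e"
    and U: "is_tadpole H y Ua" "x \<notin> fst Ua" "tadpole_path_contains H y Ub e"
    and sc: "\<forall>S\<in>set sc. signed_circuit H S" and cov: "cover6 H ([P1, P2, N1, N2, Ta, Tb, Ua, Ub] @ sc)"
    using assms by (rule psi_star2_normal_form)
  obtain Xb where Xb: "tadpole_path_contains G x Xb f2" "e \<notin> snd Xb" "f1 \<in> snd Xb" "f2 \<in> snd Xb"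
      "\<And>g. g \<notin> {e, f1, f2} \<Longrightarrow> g \<in> snd Xb \<longleftrightarrow> g \<in> snd Tb"
    by (rule tadpole_reroute_e[OF T(3)]) blast
  have tadpoles: "is_tadpole H x Tb" "is_tadpole H y Ub"
    using T(3) U(3) by (auto intro: tadpole_path_contains_is_tadpole)
  have paths: "is_path H x y P1" "is_path H x y P2" "is_path H x y N1" "is_path H x y N2"
    using P N by simp_all
  have "snd S \<subseteq> edges H" if "S \<in> set sc" for S
    using sc that signed_circuit_subset by blast
  then have sub: "\<forall>S\<in>set ([P1, P2, N1, N2, Ta, Tb, Ua, Ub] @ sc). snd S \<subseteq> edges H"
    using is_path_subset[OF paths(1)] is_path_subset[OF paths(2)] is_path_subset[OF paths(3)]
      is_path_subset[OF paths(4)] tadpole_subset[OF T(1)] tadpole_subset[OF U(1)]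
      tadpole_subset[OF tadpoles(1)] tadpole_subset[OF tadpoles(2)] by auto
  have e_N1: "e \<notin> snd N1" using e_notin_opposite_path[OF paths(3)] N by simp
  have e_TU: "e \<notin> snd Ta" "e \<notin> snd Ua"
    using tadpole_edge_ends[OF T(1), of e] tadpole_edge_ends[OF U(1), of e] T(2) U(2) ends_e by blast+
  have e_Tb: "e \<in> snd Tb" using T(3) unfolding tadpole_path_contains_def by auto
  let ?Q = "[extend_f1 P1, extend_f1 P2]" and ?F = "[({x, z}, {f2}), ({x, z}, {f2})]"
    and ?X = "[(fst N1, insert e (snd N1)), Xb]" and ?Z = "[extend_f1 Ua, extend_f2 Ta]"
    and ?S = "[extend_f1f2 Ub, extend_f1f2 N2] @ sc"
  have covG: "cover6 G (?Q @ ?F @ ?X @ ?Z @ ?S)"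
    using cover6_join_vertex[OF cov sub e_N1 e_TU e_Tb Xb(2-5)] by simp
  have Q: "\<forall>P\<in>set ?Q. is_path G x z P \<and> sigma G P = - s2" and F: "\<forall>P\<in>set ?F. is_path G x z P \<and> sigma G P = s2"
    using is_path_extend_f1 P is_path_f2 by auto
  have X: "\<forall>T\<in>set ?X. is_tadpole G x T" "star_cond G x z f2 ?X"
    using is_tadpole_add_e N tadpole_path_contains_is_tadpole[OF Xb(1)] Xb(1)
      is_path_subset[of H x y N1] z unfolding star_cond_def by auto
  have Z: "\<forall>T\<in>set ?Z. is_tadpole G z T" "star_cond G z x f2 ?Z"
    using is_tadpole_extend_f1[OF U(1)] tadpole_path_contains_extend_f2[OF T(1)]
      tadpole_path_contains_is_tadpole[OF tadpole_path_contains_extend_f2[OF T(1)]] U(2) distinct_new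
    unfolding star_cond_def extend_f1_def by auto
  have S: "\<forall>S\<in>set ?S. signed_circuit G S"
    using barbell_extend_f1f2[OF U(3)] balanced_circuit_extend_f1f2 N sc H_in_G.signed_circuit_image
    unfolding signed_circuit_def by auto
  show ?thesis by (rule has_psi_star2I[OF Q F s2 _ _ X(1) Z(1) S covG X(2) Z(2)]) simp_all
qed

end

section \<open>The exceptional graphs R2, R4 and R5\<close>

context join_vertex_setting
begin

lemma has_psi_star2_join_vertex_of_sim_R:
  fixes R :: "('w,'f) sgraph"
  assumes sim: "sim_R H x y R rx ry"
    and R_e: "\<forall>g\<in>edges R. ends R g = {rx, ry} \<longrightarrow> sgn R g = 1"
    and c: "c \<notin> verts R" and g: "g1 \<notin> edges R" "g2 \<notin> edges R" "g1 \<noteq> g2"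
    and cover: "has_psi_star2 (join_vertex R rx ry c g1 g2 1 (-1)) rx c g2"
  shows "has_psi_star2 G x z f2"
proof -
  obtain H' where sw: "sw_equiv H H'" and iso: "iso_2t H' x y R rx ry"
    using sim unfolding sim_R_def by blast
  obtain \<tau>' where H'_H: "surj_switching_emb H' H id id \<tau>'"
    using sw by (rule sw_equiv_switching_emb)
  have frame: "verts H' = verts H" "edges H' = edges H" "ends H' = ends H"
    using sw_equiv_frame[OF sw] by auto
  then have ends_H': "\<forall>f\<in>edges H'. ends H' f \<subseteq> verts H'" using ends_subset by simp
  obtain \<phi> \<psi> where R_H': "surj_switching_emb R H' \<phi> \<psi> (\<lambda>_. 1)" and \<phi>: "\<phi> rx = x" "\<phi> ry = y"
    using iso_2t_inverse_switching_emb[OF iso ends_H'] x y frame by metis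
  have R_frame: "rx \<in> verts R" "ry \<in> verts R" "\<forall>g\<in>edges R. ends R g \<subseteq> verts R"
    using iso_2t_frame[OF iso ends_H'] x y frame by auto
  define \<tau> where "\<tau> = (\<lambda>v. \<tau>' (\<phi> v))"
  have R_H: "surj_switching_emb R H \<phi> \<psi> \<tau>"
    using surj_switching_emb_comp[OF R_H' H'_H] by (simp add: \<tau>_def)
  interpret R_H: surj_switching_emb R H \<phi> \<psi> \<tau> by (fact R_H)
  obtain g where "g \<in> edges R" "\<psi> g = e" using R_H.edges_onto e by blast
  moreover have "ends R g = {rx, ry}"
  proof -
    have "\<phi> ` ends R g = \<phi> ` {rx, ry}"
      using R_H.ends_image[OF \<open>g \<in> edges R\<close>] \<open>\<psi> g = e\<close> ends_e \<phi> by simp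
    moreover have "ends R g \<subseteq> verts R" "{rx, ry} \<subseteq> verts R" using R_frame \<open>g \<in> edges R\<close> by auto
    ultimately show ?thesis using inj_on_image_eq_iff[OF R_H.inj_verts] by blast
  qed
  ultimately have "sgn H e = \<tau> rx * \<tau> ry"
    using R_H.sgn_image R_e by fastforce
  then have "s1 * s2 = 1 * -1 * \<tau> rx * \<tau> ry" using sign_relation by simp
  then have "surj_switching_emb (join_vertex R rx ry c g1 g2 1 (-1)) G
      (\<phi>(c := z)) (\<psi>(g1 := f1, g2 := f2)) (\<tau>(c := s1 * 1 * \<tau> ry))"
    using surj_switching_emb_join_vertex[OF R_H R_frame(3,1,2) c z g f1 f2 f12 _ s1, of 1 s2 "-1"] \<phi>
    by simp
  then interpret RG: surj_switching_emb "join_vertex R rx ry c g1 g2 1 (-1)" G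
      "\<phi>(c := z)" "\<psi>(g1 := f1, g2 := f2)" "\<tau>(c := s1 * 1 * \<tau> ry)" .
  have "rx \<noteq> c" using R_frame c by auto
  then show ?thesis
    using RG.has_psi_star2_image[OF _ _ cover] R_frame(1) \<phi> g(3) by (simp add: join_vertex_simps)
qed

end

text \<open>In \<open>join_vertex R 0 1 n m (m + 1) 1 (-1)\<close> the new vertex is n, the edge m joins y = 1
  to it and the negative edge m + 1 joins x = 0 to it. In the covers below, P1, P2 are the positive
  xz-paths, N is the negative one, X1, X2 and Z1, Z2 are the tadpoles at x and at z (the
  tadpole-paths of X2 and Z2 use xz), and the S's and B are balanced circuits and a barbell.\<close>

lemma unbalanced_circuitI:
  "path_seq G vs es \<Longrightarrow> g \<in> edges G \<Longrightarrow> g \<notin> set es \<Longrightarrow> ends G g = {last vs, hd vs} \<Longrightarrow>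
    sigma G (set vs, insert g (set es)) = -1 \<Longrightarrow> unbalanced_circuit G (set vs, insert g (set es))"
  unfolding unbalanced_circuit_def by (simp add: is_circuit_closed_path)

lemma balanced_signed_circuitI:
  "path_seq G vs es \<Longrightarrow> g \<in> edges G \<Longrightarrow> g \<notin> set es \<Longrightarrow> ends G g = {last vs, hd vs} \<Longrightarrow>
    sigma G (set vs, insert g (set es)) = 1 \<Longrightarrow> signed_circuit G (set vs, insert g (set es))"
  unfolding signed_circuit_def balanced_circuit_def by (simp add: is_circuit_closed_path)

lemma tadpole_pcI:
  assumes "path_seq G vs es" "hd vs = u" "unbalanced_circuit G C" "set vs \<inter> fst C = {last vs}"
  shows "tadpole_pc G u (set vs, set es) C"
  unfolding tadpole_pc_def using is_pathI[OF assms(1,2) refl] assms(3,4) by fastforce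

lemma tadpole_path_containsI:
  assumes "path_seq G vs es" "hd vs = u" "unbalanced_circuit G C" "set vs \<inter> fst C = {last vs}"
    "f \<in> set es"
  shows "tadpole_path_contains G u (set vs \<union> fst C, set es \<union> snd C) f"
  unfolding tadpole_path_contains_def using tadpole_pcI[OF assms(1-4)] assms(5)
  by (intro exI[of _ "(set vs, set es)"] exI[of _ C]) simp

lemma is_tadpoleI:
  assumes "path_seq G vs es" "hd vs = u" "unbalanced_circuit G C" "set vs \<inter> fst C = {last vs}"
  shows "is_tadpole G u (set vs \<union> fst C, set es \<union> snd C)"
  unfolding is_tadpole_def using tadpole_pcI[OF assms]
  by (intro exI[of _ "(set vs, set es)"] exI[of _ C]) simp

lemma barbell_at_vertexI:
  assumes "unbalanced_circuit G C1" "unbalanced_circuit G C2" "snd C1 \<inter> snd C2 = {}" "fst C1 \<inter> fst C2 = {v}"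
  shows "signed_circuit G (fst C1 \<union> fst C2 \<union> {v}, snd C1 \<union> snd C2)"
  unfolding signed_circuit_def is_barbell_def using assms
  by (intro disjI2 exI[of _ C1] exI[of _ C2] exI[of _ "({v}, {})"]) simp

lemma barbell_via_pathI:
  assumes "unbalanced_circuit G C1" "unbalanced_circuit G C2" "snd C1 \<inter> snd C2 = {}" "fst C1 \<inter> fst C2 = {}"
    "path_seq G vs es" "hd vs \<in> fst C1" "last vs \<in> fst C2" "set vs \<inter> (fst C1 \<union> fst C2) = {hd vs, last vs}"
  shows "signed_circuit G (fst C1 \<union> fst C2 \<union> set vs, snd C1 \<union> snd C2 \<union> set es)"
proof -
  have "\<exists>a b. a \<in> fst C1 \<and> b \<in> fst C2 \<and> is_path G a b (set vs, set es) \<and>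
      fst (set vs, set es) \<inter> (fst C1 \<union> fst C2) = {a, b}"
    using assms(6-8) is_pathI[OF assms(5) refl refl] by (intro exI[of _ "hd vs"] exI[of _ "last vs"]) simp
  then show ?thesis unfolding signed_circuit_def is_barbell_def using assms(1-4)
    by (intro disjI2 exI[of _ C1] exI[of _ C2] exI[of _ "(set vs, set es)"]) simp
qed

lemma has_psi_star2_join_R2: "has_psi_star2 (join_vertex R2 0 1 3 4 5 1 (-1)) 0 3 5"
proof -
  let ?G = "join_vertex R2 0 1 3 4 5 1 (-1)"
  note G_def = join_vertex_def R2_def mk_sg_def
  note seq = path_seq_Cons path_seq_Nil sigma_def insert_commute
  define C0 :: "nat set \<times> nat set" where "C0 = (set [2, 1, 0], insert 1 (set [3, 0]))"
  define C1 :: "nat set \<times> nat set" where "C1 = (set [2, 1], insert 2 (set [3]))"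
  define C2 :: "nat set \<times> nat set" where "C2 = (set [3, 0, 1], insert 4 (set [5, 0]))"
  have C: "unbalanced_circuit ?G C0" "unbalanced_circuit ?G C1" "unbalanced_circuit ?G C2"
    unfolding C0_def C1_def C2_def by (rule unbalanced_circuitI; simp add: G_def seq)+
  define P1 :: "nat set \<times> nat set" where "P1 = (set [0, 1, 3], set [0, 4])"
  define P2 :: "nat set \<times> nat set" where "P2 = (set [0, 2, 1, 3], set [1, 2, 4])"
  define N :: "nat set \<times> nat set" where "N = (set [0, 3], set [5])"
  have P: "is_path ?G 0 3 P1" "is_path ?G 0 3 P2" "is_path ?G 0 3 N"
    unfolding P1_def P2_def N_def by (rule is_pathI; simp add: G_def seq)+
  have sigma: "sigma ?G P1 = 1" "sigma ?G P2 = 1" "sigma ?G N = -1"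
    unfolding P1_def P2_def N_def by (simp_all add: G_def seq)
  define X1 :: "nat set \<times> nat set" where "X1 = (set [0] \<union> fst C0, set [] \<union> snd C0)"
  define X2 :: "nat set \<times> nat set" where "X2 = (set [0, 3, 1] \<union> fst C1, set [5, 4] \<union> snd C1)"
  define Z1 :: "nat set \<times> nat set" where "Z1 = (set [3, 1] \<union> fst C1, set [4] \<union> snd C1)"
  define Z2 :: "nat set \<times> nat set" where "Z2 = (set [3, 0] \<union> fst C0, set [5] \<union> snd C0)"
  have X: "is_tadpole ?G 0 X1" "tadpole_path_contains ?G 0 X2 5"
    unfolding X1_def X2_def
    by (rule is_tadpoleI[OF _ _ C(1)] tadpole_path_containsI[OF _ _ C(2)]; simp add: G_def seq C0_def C1_def)+
  have Z: "is_tadpole ?G 3 Z1" "tadpole_path_contains ?G 3 Z2 5"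
    unfolding Z1_def Z2_def
    by (rule is_tadpoleI[OF _ _ C(2)] tadpole_path_containsI[OF _ _ C(1)]; simp add: G_def seq C0_def C1_def)+
  define S1 :: "nat set \<times> nat set" where "S1 = (set [2, 1, 0], insert 1 (set [2, 0]))"
  define S2 :: "nat set \<times> nat set" where "S2 = (set [3, 0, 2, 1], insert 4 (set [5, 1, 3]))"
  have S: "signed_circuit ?G S1" "signed_circuit ?G S2"
    unfolding S1_def S2_def by (rule balanced_signed_circuitI; simp add: G_def seq)+
  define B :: "nat set \<times> nat set" where "B = (fst C2 \<union> fst C1 \<union> {1}, snd C2 \<union> snd C1)"
  have B: "signed_circuit ?G B"
    unfolding B_def by (rule barbell_at_vertexI[OF C(3,2)]) (simp_all add: C2_def C1_def)
  have "cover6 ?G [P1, P2, N, N, X1, X2, Z1, Z2, S1, S1, S2, B]"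
    unfolding cover6_def P1_def P2_def N_def X1_def X2_def Z1_def Z2_def S1_def S2_def B_def C0_def C1_def C2_def
    by (simp add: G_def lessThan_nat_numeral lessThan_Suc)
  then have "psi_cover ?G 0 3 2 [P1, P2] [N, N] [X1, X2] [Z1, Z2] [S1, S1, S2, B]"
    unfolding psi_cover_def using P sigma X(1) Z(1) S B
      tadpole_path_contains_is_tadpole[OF X(2)] tadpole_path_contains_is_tadpole[OF Z(2)] by simp
  moreover have "star_cond ?G 0 3 5 [X1, X2]" "star_cond ?G 3 0 5 [Z1, Z2]"
    unfolding star_cond_def using X(2) Z(2) by (simp_all add: X1_def Z1_def C0_def C1_def)
  ultimately show ?thesis unfolding has_psi_star2_def by blast
qed

lemma has_psi_star2_join_R4: "has_psi_star2 (join_vertex R4 0 1 4 6 7 1 (-1)) 0 4 7"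
proof -
  let ?G = "join_vertex R4 0 1 4 6 7 1 (-1)"
  note G_def = join_vertex_def R4_def mk_sg_def
  note seq = path_seq_Cons path_seq_Nil sigma_def insert_commute
  define C0 :: "nat set \<times> nat set" where "C0 = (set [3, 2, 0], insert 4 (set [5, 0]))"
  define C1 :: "nat set \<times> nat set" where "C1 = (set [3, 2], insert 1 (set [5]))"
  define C2 :: "nat set \<times> nat set" where "C2 = (set [4, 0, 1], insert 6 (set [7, 3]))"
  have C: "unbalanced_circuit ?G C0" "unbalanced_circuit ?G C1" "unbalanced_circuit ?G C2"
    unfolding C0_def C1_def C2_def by (rule unbalanced_circuitI; simp add: G_def seq)+
  define P1 :: "nat set \<times> nat set" where "P1 = (set [0, 2, 3, 1, 4], set [0, 1, 2, 6])"
  define P2 :: "nat set \<times> nat set" where "P2 = (set [0, 1, 4], set [3, 6])"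
  define N :: "nat set \<times> nat set" where "N = (set [0, 4], set [7])"
  have P: "is_path ?G 0 4 P1" "is_path ?G 0 4 P2" "is_path ?G 0 4 N"
    unfolding P1_def P2_def N_def by (rule is_pathI; simp add: G_def seq)+
  have sigma: "sigma ?G P1 = 1" "sigma ?G P2 = 1" "sigma ?G N = -1"
    unfolding P1_def P2_def N_def by (simp_all add: G_def seq)
  define X1 :: "nat set \<times> nat set" where "X1 = (set [0] \<union> fst C0, set [] \<union> snd C0)"
  define X2 :: "nat set \<times> nat set" where "X2 = (set [0, 4, 1, 3] \<union> fst C1, set [7, 6, 2] \<union> snd C1)"
  define Z1 :: "nat set \<times> nat set" where "Z1 = (set [4, 1, 3] \<union> fst C1, set [6, 2] \<union> snd C1)"
  define Z2 :: "nat set \<times> nat set" where "Z2 = (set [4, 0] \<union> fst C0, set [7] \<union> snd C0)"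
  have X: "is_tadpole ?G 0 X1" "tadpole_path_contains ?G 0 X2 7"
    unfolding X1_def X2_def
    by (rule is_tadpoleI[OF _ _ C(1)] tadpole_path_containsI[OF _ _ C(2)]; simp add: G_def seq C0_def C1_def)+
  have Z: "is_tadpole ?G 4 Z1" "tadpole_path_contains ?G 4 Z2 7"
    unfolding Z1_def Z2_def
    by (rule is_tadpoleI[OF _ _ C(2)] tadpole_path_containsI[OF _ _ C(1)]; simp add: G_def seq C0_def C1_def)+
  define S1 :: "nat set \<times> nat set" where "S1 = (set [3, 0, 2], insert 1 (set [4, 0]))"
  define S2 :: "nat set \<times> nat set" where "S2 = (set [3, 0, 1], insert 2 (set [4, 3]))"
  have S: "signed_circuit ?G S1" "signed_circuit ?G S2"
    unfolding S1_def S2_def by (rule balanced_signed_circuitI; simp add: G_def seq)+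
  define B :: "nat set \<times> nat set" where "B = (fst C2 \<union> fst C1 \<union> set [0, 2], snd C2 \<union> snd C1 \<union> set [0])"
  have B: "signed_circuit ?G B"
    unfolding B_def by (rule barbell_via_pathI[OF C(3,2)]) (simp_all add: C2_def C1_def G_def seq)
  have "cover6 ?G [P1, P2, N, N, X1, X2, Z1, Z2, S1, S2, S2, S2, B, B]"
    unfolding cover6_def P1_def P2_def N_def X1_def X2_def Z1_def Z2_def S1_def S2_def B_def C0_def C1_def C2_def
    by (simp add: G_def lessThan_nat_numeral lessThan_Suc)
  then have "psi_cover ?G 0 4 2 [P1, P2] [N, N] [X1, X2] [Z1, Z2] [S1, S2, S2, S2, B, B]"
    unfolding psi_cover_def using P sigma X(1) Z(1) S B
      tadpole_path_contains_is_tadpole[OF X(2)] tadpole_path_contains_is_tadpole[OF Z(2)] by simp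
  moreover have "star_cond ?G 0 4 7 [X1, X2]" "star_cond ?G 4 0 7 [Z1, Z2]"
    unfolding star_cond_def using X(2) Z(2) by (simp_all add: X1_def Z1_def C0_def C1_def)
  ultimately show ?thesis unfolding has_psi_star2_def by blast
qed

lemma has_psi_star2_join_R5: "has_psi_star2 (join_vertex R5 0 1 5 7 8 1 (-1)) 0 5 8"
proof -
  let ?G = "join_vertex R5 0 1 5 7 8 1 (-1)"
  note G_def = join_vertex_def R5_def mk_sg_def
  note seq = path_seq_Cons path_seq_Nil sigma_def insert_commute
  define C0 :: "nat set \<times> nat set" where "C0 = (set [4, 3, 0, 2], insert 2 (set [6, 0, 3]))"
  define C1 :: "nat set \<times> nat set" where "C1 = (set [4, 3], insert 1 (set [6]))"
  define C2 :: "nat set \<times> nat set" where "C2 = (set [5, 0, 1], insert 7 (set [8, 4]))"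
  have C: "unbalanced_circuit ?G C0" "unbalanced_circuit ?G C1" "unbalanced_circuit ?G C2"
    unfolding C0_def C1_def C2_def by (rule unbalanced_circuitI; simp add: G_def seq)+
  define P1 :: "nat set \<times> nat set" where "P1 = (set [0, 3, 4, 2, 1, 5], set [0, 1, 2, 5, 7])"
  define P2 :: "nat set \<times> nat set" where "P2 = (set [0, 1, 5], set [4, 7])"
  define N :: "nat set \<times> nat set" where "N = (set [0, 5], set [8])"
  have P: "is_path ?G 0 5 P1" "is_path ?G 0 5 P2" "is_path ?G 0 5 N"
    unfolding P1_def P2_def N_def by (rule is_pathI; simp add: G_def seq)+
  have sigma: "sigma ?G P1 = 1" "sigma ?G P2 = 1" "sigma ?G N = -1"
    unfolding P1_def P2_def N_def by (simp_all add: G_def seq)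
  define X1 :: "nat set \<times> nat set" where "X1 = (set [0] \<union> fst C0, set [] \<union> snd C0)"
  define X2 :: "nat set \<times> nat set" where "X2 = (set [0, 5, 1, 2, 4] \<union> fst C1, set [8, 7, 5, 2] \<union> snd C1)"
  define Z1 :: "nat set \<times> nat set" where "Z1 = (set [5, 1, 2, 4] \<union> fst C1, set [7, 5, 2] \<union> snd C1)"
  define Z2 :: "nat set \<times> nat set" where "Z2 = (set [5, 0] \<union> fst C0, set [8] \<union> snd C0)"
  have X: "is_tadpole ?G 0 X1" "tadpole_path_contains ?G 0 X2 8"
    unfolding X1_def X2_def
    by (rule is_tadpoleI[OF _ _ C(1)] tadpole_path_containsI[OF _ _ C(2)]; simp add: G_def seq C0_def C1_def)+
  have Z: "is_tadpole ?G 5 Z1" "tadpole_path_contains ?G 5 Z2 8"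
    unfolding Z1_def Z2_def
    by (rule is_tadpoleI[OF _ _ C(2)] tadpole_path_containsI[OF _ _ C(1)]; simp add: G_def seq C0_def C1_def)+
  define S1 :: "nat set \<times> nat set" where "S1 = (set [4, 2, 0, 3], insert 1 (set [2, 3, 0]))"
  define S2 :: "nat set \<times> nat set" where "S2 = (set [2, 1, 0], insert 3 (set [5, 4]))"
  have S: "signed_circuit ?G S1" "signed_circuit ?G S2"
    unfolding S1_def S2_def by (rule balanced_signed_circuitI; simp add: G_def seq)+
  define B :: "nat set \<times> nat set" where "B = (fst C2 \<union> fst C1 \<union> set [0, 3], snd C2 \<union> snd C1 \<union> set [0])"
  have B: "signed_circuit ?G B"
    unfolding B_def by (rule barbell_via_pathI[OF C(3,2)]) (simp_all add: C2_def C1_def G_def seq)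
  have "cover6 ?G [P1, P2, N, N, X1, X2, Z1, Z2, S1, S2, S2, S2, B, B]"
    unfolding cover6_def P1_def P2_def N_def X1_def X2_def Z1_def Z2_def S1_def S2_def B_def C0_def C1_def C2_def
    by (simp add: G_def lessThan_nat_numeral lessThan_Suc)
  then have "psi_cover ?G 0 5 2 [P1, P2] [N, N] [X1, X2] [Z1, Z2] [S1, S2, S2, S2, B, B]"
    unfolding psi_cover_def using P sigma X(1) Z(1) S B
      tadpole_path_contains_is_tadpole[OF X(2)] tadpole_path_contains_is_tadpole[OF Z(2)] by simp
  moreover have "star_cond ?G 0 5 8 [X1, X2]" "star_cond ?G 5 0 8 [Z1, Z2]"
    unfolding star_cond_def using X(2) Z(2) by (simp_all add: X1_def Z1_def C0_def C1_def)
  ultimately show ?thesis unfolding has_psi_star2_def by blast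
qed

theorem mainTheorem5:
  fixes H G :: "('v,'e) sgraph" and x y z :: 'v and e f1 f2 :: 'e and s1 s2 :: int
  assumes "wf_sgraph H"
    and "x \<in> verts H" and "y \<in> verts H" and "x \<noteq> y"
    and "e \<in> edges H" and "ends H e = {x, y}"
    and "z \<notin> verts H"
    and "f1 \<notin> edges H" and "f2 \<notin> edges H" and "f1 \<noteq> f2"
    and "s1 \<in> {1, -1}" and "s2 \<in> {1, -1}"
    and "G = \<lparr>verts = insert z (verts H), edges = insert f1 (insert f2 (edges H)),
              ends = (ends H)(f1 := {y, z}, f2 := {x, z}),
              sgn = (sgn H)(f1 := s1, f2 := s2)\<rparr>"
    and "sgn H e * s1 * s2 = -1"
    and "sim_R H x y R2 0 1 \<or> sim_R H x y R4 0 1 \<or> sim_R H x y R5 0 1 \<or> has_psi_star2 H x y e"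
  shows "has_psi_star2 G x z f2"
proof -
  interpret join_vertex_setting H x y z e f1 f2 s1 s2
    using assms(1-12,14) by unfold_locales
  note R_simps = R2_def R4_def R5_def mk_sg_def lessThan_nat_numeral lessThan_Suc doubleton_eq_iff
  have "G = join_vertex H x y z f1 f2 s1 s2" using assms(13) by (simp add: join_vertex_def)
  moreover from assms(15) have "has_psi_star2 (join_vertex H x y z f1 f2 s1 s2) x z f2"
  proof (elim disjE)
    assume "sim_R H x y R2 0 1"
    then show ?thesis
      by (rule has_psi_star2_join_vertex_of_sim_R[OF _ _ _ _ _ _ has_psi_star2_join_R2]) (simp_all add: R_simps)
  next
    assume "sim_R H x y R4 0 1"
    then show ?thesis
      by (rule has_psi_star2_join_vertex_of_sim_R[OF _ _ _ _ _ _ has_psi_star2_join_R4]) (simp_all add: R_simps)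
  next
    assume "sim_R H x y R5 0 1"
    then show ?thesis
      by (rule has_psi_star2_join_vertex_of_sim_R[OF _ _ _ _ _ _ has_psi_star2_join_R5]) (simp_all add: R_simps)
  qed (rule has_psi_star2_join_vertex)
  ultimately show ?thesis by simp
qed

end
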